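(* Suppose the following statement (A) holds: for every $m\ge 1$ and all non-overlapping permutations $\pi,\tau\in\mathfrak{S}_m$ that are in standard form, if $\pi$ and $\tau$ are c-Wilf equivalent then $\pi_1=\tau_1$ and $\pi_m=\tau_m$. Then the following statement (B) holds: for every $m\ge 1$ and all permutations $\pi,\tau\in\mathfrak{S}_m$ in standard form, if $\pi$ and $\tau$ are strongly c-Wilf equivalent then $\pi_1=\tau_1$ and $\pi_m=\tau_m$.
   Context: $\mathfrak{S}_n$ is the symmetric group on $[n]$, permutations written $\sigma=\sigma_1\cdots\sigma_n$, and $\mathfrak{S}=\bigcup_{n\ge0}\mathfrak{S}_n$. The standardization $\operatorname{st}(w)$ of a word of distinct integers replaces its smallest entry by 1, the next smallest by 2, etc. For $\pi\in\mathfrak{S}_m$ and $\sigma\in\mathfrak{S}_n$, $\operatorname{Em}(\pi,\sigma)=\{i\in[n-m+1]:\operatorname{st}(\sigma_i\cdots\sigma_{i+m-1})=\pi\}$ and $\operatorname{em}(\pi,\sigma)=|\operatorname{Em}(\pi,\sigma)|$. Let $a^\pi_{n,k}$ be the number of $\sigma\in\mathfrak{S}_n$ with $\operatorname{em}(\pi,\sigma)=k$. Two permutations $\pi,\tau$ are c-Wilf equivalent if $a^\pi_{n,0}=a^\tau_{n,0}$ for all $n$, and strongly c-Wilf equivalent if $a^\pi_{n,k}=a^\tau_{n,k}$ for all $n,k$. The overlap set of $\pi\in\mathfrak{S}_m$ is $\mathcal{O}_\pi=\{i\in[m-1]:\operatorname{st}(\pi_{i+1}\cdots\pi_m)=\operatorname{st}(\pi_1\cdots\pi_{m-i})\}$;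 $\pi$ is non-overlapping if $\mathcal{O}_\pi=\{m-1\}$. A permutation $\pi\in\mathfrak{S}_m$ is in standard form if $\pi_1<\pi_m$ and $\pi_1+\pi_m\le m+1$. *)

theory Defs
  imports "HOL-Combinatorics.Multiset_Permutations"
begin

text \<open>Permutations in one-line notation are lists of naturals; the symmetric
group S_n is the set of lists that are arrangements of 1..n.\<close>

definition Sym :: "nat \<Rightarrow> nat list set" where
  "Sym n = permutations_of_set {1..n}"

definition st :: "nat list \<Rightarrow> nat list" where
  "st w = map (\<lambda>x. card {y \<in> set w. y \<le> x}) w"

text \<open>Consecutive factor of length m starting at (1-based) position i.\<close>
definition factor :: "nat list \<Rightarrow> nat \<Rightarrow> nat \<Rightarrow> nat list" where
  "factor \<sigma> i m = take m (drop (i - 1) \<sigma>)"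

definition Em :: "nat list \<Rightarrow> nat list \<Rightarrow> nat set" where
  "Em \<pi> \<sigma> = {i. 1 \<le> i \<and> i + length \<pi> \<le> length \<sigma> + 1 \<and>
                   st (factor \<sigma> i (length \<pi>)) = \<pi>}"

definition em :: "nat list \<Rightarrow> nat list \<Rightarrow> nat" where
  "em \<pi> \<sigma> = card (Em \<pi> \<sigma>)"

definition a_count :: "nat list \<Rightarrow> nat \<Rightarrow> nat \<Rightarrow> nat" where
  "a_count \<pi> n k = card {\<sigma> \<in> Sym n. em \<pi> \<sigma> = k}"

definition c_wilf_equiv :: "nat list \<Rightarrow> nat list \<Rightarrow> bool" where
  "c_wilf_equiv \<pi> \<tau> \<longleftrightarrow> (\<forall>n. a_count \<pi> n 0 = a_count \<tau> n 0)"

definition strongly_c_wilf_equiv :: "nat list \<Rightarrow> nat list \<Rightarrow> bool" where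
  "strongly_c_wilf_equiv \<pi> \<tau> \<longleftrightarrow> (\<forall>n k. a_count \<pi> n k = a_count \<tau> n k)"

definition overlap_set :: "nat list \<Rightarrow> nat set" where
  "overlap_set \<pi> = {i. 1 \<le> i \<and> i \<le> length \<pi> - 1 \<and>
                        st (drop i \<pi>) = st (take (length \<pi> - i) \<pi>)}"

definition non_overlapping :: "nat list \<Rightarrow> bool" where
  "non_overlapping \<pi> \<longleftrightarrow> overlap_set \<pi> = {length \<pi> - 1}"

text \<open>Standard form: pi_1 < pi_m and pi_1 + pi_m <= m + 1 (1-based, so pi_1 = \<pi>!0, pi_m = last).\<close>
definition standard_form :: "nat list \<Rightarrow> bool" where
  "standard_form \<pi> \<longleftrightarrow> \<pi> ! 0 < \<pi> ! (length \<pi> - 1) \<and>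
                         \<pi> ! 0 + \<pi> ! (length \<pi> - 1) \<le> length \<pi> + 1"

end

theory Submission
  imports Defs
begin

text \<open>
  This is the Goulden--Jackson cluster method. A marked permutation is a permutation together
  with a set of marked occurrences of the pattern. The numbers of marked permutations, counted
  by length and number of marks, are binomial transforms of the counts \<open>a_count p n k\<close>;
  so strong c-Wilf equivalence gives equal marked counts, and equal marked counts give
  c-Wilf equivalence by inclusion--exclusion. Cutting a marked permutation after its first
  block of linked positions yields a recurrence between the marked counts and the numbers of
  clusters, which can be solved in both directions.

  A cluster with \<open>k\<close> marks has length at most \<open>k(m - 1) + 1\<close>, with equality exactly for
  the chains, whose consecutive occurrences share one entry. Hence strongly c-Wilf equivalent
  patterns have the same numbers of chains. Permuting positions inside every window shows that
  these numbers depend only on the first and the last entry. For a non-overlapping pattern every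
  cluster is a chain, so non-overlapping patterns with the same chain numbers are c-Wilf
  equivalent.

  Given strongly c-Wilf equivalent \<open>\<pi>\<close> and \<open>\<tau>\<close> in standard form, replace each of them by
  a non-overlapping pattern in standard form with the same first and last entries. The two
  replacements are c-Wilf equivalent, so (A) forces equal ends. Such replacements exist unless
  the ends are \<open>(1, m)\<close>, or \<open>(2, 3)\<close> with \<open>m = 4\<close>; these cases are separated by the number
  of chains with two occurrences, which is \<open>C(a + b - 2, b - 1) C(2m - a - b, m - b)\<close> for
  ends \<open>(a, b)\<close>.
\<close>

lemma card_Collect_plus_eq_sum:
  assumes "finite A" "finite B"
  shows "card {(a, b) \<in> A \<times> B. f a + g b = (j::nat)}
    = (\<Sum>k\<le>j. card {a \<in> A. f a = k} * card {b \<in> B. g b = j - k})"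
proof -
  have "{(a, b) \<in> A \<times> B. f a + g b = j} = (\<Union>k\<le>j. {a \<in> A. f a = k} \<times> {b \<in> B. g b = j - k})"
    by auto
  then show ?thesis
    using assms by (simp add: card_UN_disjoint card_cartesian_product disjoint_iff)
qed

lemma card_UN_eq_sum_imp_disjoint:
  assumes "finite I" "\<And>i. i \<in> I \<Longrightarrow> finite (A i)" "card (\<Union>i\<in>I. A i) = (\<Sum>i\<in>I. card (A i))"
  shows "\<And>i j. i \<in> I \<Longrightarrow> j \<in> I \<Longrightarrow> i \<noteq> j \<Longrightarrow> A i \<inter> A j = {}"
  using assms
proof (induction I rule: finite_induct)
  case (insert i0 I)
  let ?U = "\<Union>i\<in>I. A i"
  have fin: "finite (A i0)" "finite ?U" using insert.prems insert.hyps(1) by auto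
  have "card (A i0) + card ?U = card (A i0 \<union> ?U) + card (A i0 \<inter> ?U)"
    by (rule card_Un_Int[OF fin])
  moreover have "card (A i0 \<union> ?U) = card (A i0) + (\<Sum>i\<in>I. card (A i))"
    using insert by simp
  moreover have "card ?U \<le> (\<Sum>i\<in>I. card (A i))"
    by (rule card_UN_le[OF insert.hyps(1)])
  ultimately have "card (A i0 \<inter> ?U) = 0" "card ?U = (\<Sum>i\<in>I. card (A i))"
    by linarith+
  then have "A i0 \<inter> ?U = {}" "\<And>i j. i \<in> I \<Longrightarrow> j \<in> I \<Longrightarrow> i \<noteq> j \<Longrightarrow> A i \<inter> A j = {}"
    using fin insert.IH insert.prems by auto
  then show ?case using insert.prems(1-3) by blast
qed simp

lemma interval_tiling_eq_multiples:
  fixes c :: nat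
  assumes fin: "finite P" and c: "0 < c" and tiling: "(\<Union>x\<in>P. {x..<x + c}) = {..<card P * c}"
  shows "P = (\<lambda>i. i * c) ` {..<card P}"
proof -
  let ?k = "card P"
  have disjoint: "{x..<x + c} \<inter> {y..<y + c} = {}" if "x \<in> P" "y \<in> P" "x \<noteq> y" for x y
    by (rule card_UN_eq_sum_imp_disjoint[OF fin _ _ that]) (use tiling in simp_all)
  have covered: "\<exists>x\<in>P. x \<le> y \<and> y < x + c" if "y < ?k * c" for y
    using that tiling by (metis (no_types, lifting) UN_E atLeastLessThan_iff lessThan_iff)
  have "i * c \<in> P" if "i < ?k" for i
    using that
  proof (induction i)
    case 0
    then show ?case using covered[of 0] c by auto
  next
    case (Suc i)
    then have "Suc i * c < ?k * c" using c by (intro mult_strict_right_mono) simp_all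
    then obtain x where x: "x \<in> P" "x \<le> Suc i * c" "Suc i * c < x + c" using covered by blast
    have "x = Suc i * c"
    proof (rule ccontr)
      assume "x \<noteq> Suc i * c"
      then have "x \<in> {x..<x + c} \<inter> {i * c..<i * c + c}" using x c by auto
      moreover have "i * c \<in> P" "x \<noteq> i * c" using Suc x by auto
      ultimately show False using disjoint[OF x(1)] by blast
    qed
    then show ?case using x by simp
  qed
  then have "(\<lambda>i. i * c) ` {..<?k} \<subseteq> P" by auto
  moreover have "card ((\<lambda>i. i * c) ` {..<?k}) = ?k"
    using c by (simp add: card_image inj_on_def)
  ultimately show ?thesis using card_subset_eq[OF fin] by metis
qed

lemma card_less_in_interval:
  assumes "y \<le> n + 1"
  shows "card {v \<in> {1..n}. v < y} = y - 1"
proof -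
  have "{v \<in> {1..n}. v < y} = {1..<y}" using assms by auto
  then show ?thesis by simp
qed

lemma card_split_at:
  assumes "finite S" "(y::nat) \<in> S"
  shows "card S = card {v \<in> S. v < y} + 1 + card {v \<in> S. y < v}"
proof -
  have "S = {v \<in> S. v < y} \<union> insert y {v \<in> S. y < v}" using assms(2) by auto
  also have "card \<dots> = card {v \<in> S. v < y} + card (insert y {v \<in> S. y < v})"
    using assms(1) by (intro card_Un_disjoint) auto
  finally show ?thesis
    using assms(1) by simp
qed

lemma choose_eq_1_imp: "(n::nat) choose k = 1 \<Longrightarrow> k = 0 \<or> k = n"
proof (rule ccontr)
  assume one: "n choose k = 1" and "\<not> (k = 0 \<or> k = n)"
  moreover have "k \<le> n" using one by (metis binomial_eq_0 zero_neq_one not_le)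
  ultimately obtain n' k' where nk: "n = Suc n'" "k = Suc k'" "k' < n'"
    by (metis Suc_less_SucD gr0_conv_Suc le_neq_implies_less less_imp_Suc_add not_gr_zero)
  then have "(n' choose k') + (n' choose Suc k') = 1" using one by simp
  moreover have "0 < n' choose k'" "0 < n' choose Suc k'" using nk by simp_all
  ultimately show False by linarith
qed

lemma card_split_threshold:
  assumes "finite P"
  shows "card {x \<in> P. x < l} + card ((\<lambda>x. x - l) ` {x \<in> P. l \<le> x}) = card (P :: nat set)"
proof -
  have "card ((\<lambda>x. x - l) ` {x \<in> P. l \<le> x}) = card {x \<in> P. l \<le> x}"
    by (rule card_image) (auto simp: inj_on_def)
  moreover have "P = {x \<in> P. x < l} \<union> {x \<in> P. l \<le> x}" by auto
  ultimately show ?thesis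
    using assms by (metis (no_types, lifting) card_Un_disjoint disjoint_iff finite_Un mem_Collect_eq not_le)
qed

section \<open>Standardization\<close>

lemma Sym_iff: "p \<in> Sym n \<longleftrightarrow> set p = {1..n} \<and> distinct p"
  by (simp add: Sym_def permutations_of_set_def)

lemma length_Sym: "p \<in> Sym n \<Longrightarrow> length p = n"
  by (metis Sym_iff card_atLeastAtMost diff_Suc_1 distinct_card)

lemma finite_Sym: "finite (Sym n)"
  by (simp add: Sym_def)

lemma Sym_0: "Sym 0 = {[]}"
  by (auto simp: Sym_iff)

lemma bij_betw_nth_Sym: "\<sigma> \<in> Sym n \<Longrightarrow> bij_betw ((!) \<sigma>) {..<n} {1..n}"
  using length_Sym[of \<sigma> n] by (intro bij_betw_nth) (auto simp: Sym_iff)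

lemma nth_Sym_bounds: "p \<in> Sym n \<Longrightarrow> i < n \<Longrightarrow> 1 \<le> p ! i \<and> p ! i \<le> n"
  by (metis Sym_iff atLeastAtMost_iff length_Sym nth_mem)

definition rank_in :: "nat set \<Rightarrow> nat \<Rightarrow> nat" where
  "rank_in V x = card {v \<in> V. v < x}"

lemma rank_in_strict_mono: "finite V \<Longrightarrow> strict_mono_on V (rank_in V)"
  unfolding rank_in_def by (intro strict_mono_onI psubset_card_mono) auto

lemma rank_in_nth_sorted_list_of_set:
  assumes "i < card V"
  shows "rank_in V (sorted_list_of_set V ! i) = i"
proof -
  let ?xs = "sorted_list_of_set V"
  have fin: "finite V" using assms card.infinite by fastforce
  have sorted: "sorted_wrt (<) ?xs" and len: "length ?xs = card V" and set: "set ?xs = V"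
    using fin by simp_all
  have less_iff: "?xs ! j < ?xs ! i \<longleftrightarrow> j < i" if "j < card V" for j
    using sorted_wrt_nth_less[OF sorted] that assms len by (metis linorder_neqE_nat order_less_asym)
  have "{v \<in> V. v < ?xs ! i} = (!) ?xs ` {..<i}"
  proof
    show "{v \<in> V. v < ?xs ! i} \<subseteq> (!) ?xs ` {..<i}"
    proof
      fix v assume v: "v \<in> {v \<in> V. v < ?xs ! i}"
      then obtain j where "j < card V" "v = ?xs ! j"
        using set len by (metis in_set_conv_nth mem_Collect_eq)
      then show "v \<in> (!) ?xs ` {..<i}" using v less_iff by auto
    qed
    show "(!) ?xs ` {..<i} \<subseteq> {v \<in> V. v < ?xs ! i}"
      using less_iff assms len set by auto
  qed
  moreover have "inj_on ((!) ?xs) {..<i}"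
    using assms len by (intro inj_on_nth) auto
  ultimately show ?thesis
    unfolding rank_in_def by (simp add: card_image)
qed

lemma nth_sorted_list_of_set_rank_in:
  assumes "finite V" "x \<in> V"
  shows "sorted_list_of_set V ! rank_in V x = x"
proof -
  obtain i where "i < card V" "x = sorted_list_of_set V ! i"
    using assms by (metis in_set_conv_nth length_sorted_list_of_set set_sorted_list_of_set)
  then show ?thesis by (simp add: rank_in_nth_sorted_list_of_set)
qed

lemma length_st [simp]: "length (st w) = length w"
  by (simp add: st_def)

lemma st_conv_rank_in: "st w = map (\<lambda>x. Suc (rank_in (set w) x)) w"
proof -
  have "{y \<in> set w. y \<le> x} = insert x {y \<in> set w. y < x}" if "x \<in> set w" for x
    using that by auto
  then show ?thesis
    unfolding st_def rank_in_def by (intro map_cong) auto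
qed

lemma st_map_strict_mono:
  assumes f: "strict_mono_on (set w) f"
  shows "st (map f w) = st w"
proof -
  have "{y \<in> f ` set w. y \<le> f x} = f ` {y \<in> set w. y \<le> x}" if "x \<in> set w" for x
    using that strict_mono_on_less_eq[OF f] by auto
  moreover have "inj_on f {y \<in> set w. y \<le> x}" for x
    using strict_mono_on_imp_inj_on[OF f] by (rule inj_on_subset) auto
  ultimately show ?thesis
    unfolding st_def by (auto simp: card_image)
qed

lemma st_take_drop_st: "st (take k (drop i (st w))) = st (take k (drop i w))"
proof -
  have "strict_mono_on (set (take k (drop i w))) (\<lambda>x. Suc (rank_in (set w) x))"
    using rank_in_strict_mono[of "set w"]
    by (auto simp: strict_mono_on_def dest: in_set_takeD in_set_dropD)
  then show ?thesis
    by (subst st_conv_rank_in) (simp add: take_map drop_map st_map_strict_mono)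
qed

lemma rank_in_image:
  assumes "finite V"
  shows "rank_in V ` V = {..<card V}"
proof
  show "rank_in V ` V \<subseteq> {..<card V}"
  proof
    fix r assume "r \<in> rank_in V ` V"
    then obtain x where x: "x \<in> V" "r = rank_in V x" by blast
    then obtain i where "i < card V" "x = sorted_list_of_set V ! i"
      using assms by (metis in_set_conv_nth length_sorted_list_of_set set_sorted_list_of_set)
    then show "r \<in> {..<card V}" using x rank_in_nth_sorted_list_of_set by simp
  qed
  show "{..<card V} \<subseteq> rank_in V ` V"
  proof
    fix i assume "i \<in> {..<card V}"
    then have "sorted_list_of_set V ! i \<in> V" "rank_in V (sorted_list_of_set V ! i) = i"
      using assms by (metis length_sorted_list_of_set lessThan_iff nth_mem set_sorted_list_of_set,
          simp add: rank_in_nth_sorted_list_of_set)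
    then show "i \<in> rank_in V ` V" by (metis imageI)
  qed
qed

lemma st_in_Sym:
  assumes "distinct w"
  shows "st w \<in> Sym (length w)"
proof -
  have "set (st w) = Suc ` rank_in (set w) ` set w"
    by (simp add: st_conv_rank_in image_image)
  also have "\<dots> = {1..length w}"
    using assms by (simp add: rank_in_image distinct_card image_Suc_lessThan)
  finally show ?thesis
    using strict_mono_on_imp_inj_on[OF rank_in_strict_mono[of "set w"]]
    by (simp add: Sym_iff st_conv_rank_in distinct_map assms inj_on_def)
qed

lemma st_Sym:
  assumes "p \<in> Sym n"
  shows "st p = p"
proof -
  have "Suc (rank_in (set p) x) = x" if "x \<in> set p" for x
  proof -
    have "{v \<in> set p. v < x} = {1..<x}" using assms that by (auto simp: Sym_iff)
    then show ?thesis using assms that by (auto simp: rank_in_def Sym_iff)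
  qed
  then show ?thesis
    unfolding st_conv_rank_in by (intro map_idI)
qed

lemma st_nth_less_iff:
  "distinct w \<Longrightarrow> j < length w \<Longrightarrow> k < length w \<Longrightarrow> st w ! j < st w ! k \<longleftrightarrow> w ! j < w ! k"
  using strict_mono_on_less[OF rank_in_strict_mono[of "set w"]] by (simp add: st_conv_rank_in)

lemma st_eq_imp_less_iff:
  assumes "st u = st v" "distinct u" "distinct v" "j < length u" "k < length u"
  shows "u ! j < u ! k \<longleftrightarrow> v ! j < v ! k"
  using assms st_nth_less_iff[of u j k] st_nth_less_iff[of v j k] length_st by metis

lemma st_singleton: "st [x] = [1]"
proof -
  have "{y. y = x \<and> y \<le> x} = {x}" by auto
  then show ?thesis by (simp add: st_def)
qed

lemma nth_sorted_list_of_set_strict_mono: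
  "strict_mono_on {..<card V} (\<lambda>i. sorted_list_of_set V ! i)"
  by (intro strict_mono_onI sorted_wrt_nth_less[OF strict_sorted_list_of_set]) simp_all

definition destandardize :: "nat set \<Rightarrow> nat list \<Rightarrow> nat list" where
  "destandardize V p = map (\<lambda>i. sorted_list_of_set V ! (i - 1)) p"

lemma length_destandardize [simp]: "length (destandardize V p) = length p"
  by (simp add: destandardize_def)

context
  fixes V :: "nat set" and p :: "nat list"
  assumes fin: "finite V" and p: "p \<in> Sym (card V)"
begin

lemma set_destandardize: "set (destandardize V p) = V"
proof -
  let ?xs = "sorted_list_of_set V"
  have "set (destandardize V p) = (\<lambda>i. ?xs ! (i - 1)) ` Suc ` {..<card V}"
    using p by (simp add: destandardize_def Sym_iff image_Suc_lessThan)
  also have "\<dots> = (!) ?xs ` {..<length ?xs}"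
    by (simp add: image_image)
  also have "\<dots> = V"
    using fin by (metis list.set_map map_nth set_sorted_list_of_set set_upt atLeast0LessThan)
  finally show ?thesis .
qed

lemma destandardize_strict_mono: "strict_mono_on (set p) (\<lambda>i. sorted_list_of_set V ! (i - 1))"
proof (rule strict_mono_onI)
  fix r s assume "r \<in> set p" "s \<in> set p" "r < s"
  then have "r - 1 < s - 1" "s - 1 < card V"
    using p by (auto simp: Sym_iff)
  then show "sorted_list_of_set V ! (r - 1) < sorted_list_of_set V ! (s - 1)"
    using strict_mono_onD[OF nth_sorted_list_of_set_strict_mono[of V]] by simp
qed

lemma distinct_destandardize: "distinct (destandardize V p)"
  using p strict_mono_on_imp_inj_on[OF destandardize_strict_mono]
  by (simp add: destandardize_def distinct_map Sym_iff)

lemma st_destandardize: "st (destandardize V p) = p"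
  unfolding destandardize_def using st_map_strict_mono[OF destandardize_strict_mono] st_Sym[OF p]
  by simp

end

lemma destandardize_st:
  assumes "distinct w"
  shows "destandardize (set w) (st w) = w"
  unfolding destandardize_def st_conv_rank_in
  by (simp add: map_idI nth_sorted_list_of_set_rank_in)

lemma rank_in_nth_if_st_eq:
  assumes "st w = p" "j < length w"
  shows "rank_in (set w) (w ! j) = p ! j - 1"
  using assms by (auto simp: st_conv_rank_in)

lemma nth_destandardize_eq:
  assumes "finite V" "y \<in> V" "j < length p" "rank_in V y = p ! j - 1"
  shows "destandardize V p ! j = y"
  using nth_sorted_list_of_set_rank_in[OF assms(1,2)] assms(3,4) by (simp add: destandardize_def)

lemma destandardize_append_Sym:
  assumes V: "V \<subseteq> {1..n}" and c: "c \<in> Sym (card V)" and s: "s \<in> Sym (card ({1..n} - V))"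
  shows "destandardize V c @ destandardize ({1..n} - V) s \<in> Sym n"
proof -
  have fin: "finite V" "finite ({1..n} - V)" using V finite_subset by auto
  then show ?thesis
    using V set_destandardize[OF _ c] set_destandardize[OF _ s]
      distinct_destandardize[OF _ c] distinct_destandardize[OF _ s]
    by (auto simp: Sym_iff)
qed

section \<open>Occurrences and marked permutations\<close>

(* Positions are 0-based: \<open>x \<in> occurrences p \<sigma>\<close> corresponds to \<open>x + 1 \<in> Em p \<sigma>\<close>. *)
definition occurs_at :: "nat list \<Rightarrow> nat list \<Rightarrow> nat \<Rightarrow> bool" where
  "occurs_at p \<sigma> x \<longleftrightarrow> x + length p \<le> length \<sigma> \<and> st (take (length p) (drop x \<sigma>)) = p"

definition occurrences :: "nat list \<Rightarrow> nat list \<Rightarrow> nat set" where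
  "occurrences p \<sigma> = {x. occurs_at p \<sigma> x}"

lemma Em_eq_image_occurrences: "Em p \<sigma> = Suc ` occurrences p \<sigma>"
proof (intro set_eqI iffI)
  fix i assume "i \<in> Em p \<sigma>"
  then have "i = Suc (i - 1)" "occurs_at p \<sigma> (i - 1)"
    by (auto simp: Em_def factor_def occurs_at_def)
  then show "i \<in> Suc ` occurrences p \<sigma>" unfolding occurrences_def by blast
qed (auto simp: Em_def factor_def occurs_at_def occurrences_def)

lemma em_eq_card_occurrences: "em p \<sigma> = card (occurrences p \<sigma>)"
  by (simp add: em_def Em_eq_image_occurrences card_image)

lemma occurrences_subset: "p \<noteq> [] \<Longrightarrow> occurrences p \<sigma> \<subseteq> {..<length \<sigma>}"
  by (cases p) (auto simp: occurrences_def occurs_at_def)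

lemma finite_occurrences: "p \<noteq> [] \<Longrightarrow> finite (occurrences p \<sigma>)"
  using occurrences_subset finite_subset by blast

lemma occurs_at_st: "occurs_at p (st \<sigma>) x \<longleftrightarrow> occurs_at p \<sigma> x"
  by (simp add: occurs_at_def st_take_drop_st)

lemma occurs_at_map_strict_mono:
  "strict_mono_on (set \<sigma>) f \<Longrightarrow> occurs_at p (map f \<sigma>) x \<longleftrightarrow> occurs_at p \<sigma> x"
  unfolding occurs_at_def drop_map take_map
  by (subst st_map_strict_mono) (auto simp: strict_mono_on_def dest: in_set_takeD in_set_dropD)

lemma occurs_at_destandardize:
  "finite V \<Longrightarrow> \<sigma> \<in> Sym (card V) \<Longrightarrow> occurs_at p (destandardize V \<sigma>) x \<longleftrightarrow> occurs_at p \<sigma> x"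
  unfolding destandardize_def by (intro occurs_at_map_strict_mono destandardize_strict_mono)

lemma occurs_at_append_left:
  "x + length p \<le> length u \<Longrightarrow> occurs_at p (u @ v) x \<longleftrightarrow> occurs_at p u x"
  by (simp add: occurs_at_def)

lemma occurs_at_append_right: "occurs_at p (u @ v) (length u + x) \<longleftrightarrow> occurs_at p v x"
  by (simp add: occurs_at_def)

lemma occurs_at_take:
  "x + length p \<le> l \<Longrightarrow> occurs_at p (take l \<sigma>) x \<longleftrightarrow> occurs_at p \<sigma> x"
  by (auto simp: occurs_at_def take_drop min_def)

lemma occurs_at_drop:
  "l \<le> length \<sigma> \<Longrightarrow> occurs_at p (drop l \<sigma>) x \<longleftrightarrow> occurs_at p \<sigma> (l + x)"
  by (auto simp: occurs_at_def add.commute add.left_commute)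

definition marked :: "nat list \<Rightarrow> nat \<Rightarrow> (nat list \<times> nat set) set" where
  "marked p n = {(\<sigma>, P). \<sigma> \<in> Sym n \<and> P \<subseteq> occurrences p \<sigma>}"

definition marked_count :: "nat list \<Rightarrow> nat \<Rightarrow> nat \<Rightarrow> nat" where
  "marked_count p n j = card {(\<sigma>, P) \<in> marked p n. card P = j}"

lemma finite_marked:
  assumes "p \<noteq> []"
  shows "finite (marked p n)"
proof -
  have "marked p n \<subseteq> Sym n \<times> Pow {..<n}"
    using occurrences_subset[OF assms] length_Sym by (fastforce simp: marked_def)
  then show ?thesis using finite_Sym finite_subset by blast
qed

lemma marked_occurrence_fits: "(\<sigma>, P) \<in> marked p n \<Longrightarrow> x \<in> P \<Longrightarrow> x + length p \<le> n"
  by (auto simp: marked_def occurrences_def occurs_at_def length_Sym)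

lemma marked_count_eq_sum_choose:
  assumes "p \<noteq> []"
  shows "marked_count p n j = (\<Sum>\<sigma>\<in>Sym n. em p \<sigma> choose j)"
proof -
  have "{(\<sigma>, P) \<in> marked p n. card P = j} = (SIGMA \<sigma>:Sym n. {P. P \<subseteq> occurrences p \<sigma> \<and> card P = j})"
    by (auto simp: marked_def)
  moreover have "finite {P. P \<subseteq> occurrences p \<sigma> \<and> card P = j}" for \<sigma>
    using finite_occurrences[OF assms] by (simp add: finite_Collect_subsets)
  ultimately show ?thesis
    unfolding marked_count_def using finite_Sym finite_occurrences[OF assms]
    by (simp add: n_subsets em_eq_card_occurrences)
qed

lemma em_le_length:
  assumes "p \<noteq> []"
  shows "em p \<sigma> \<le> length \<sigma>"
  using card_mono[OF _ occurrences_subset[OF assms]] by (simp add: em_eq_card_occurrences)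

lemma sum_Sym_by_em:
  assumes "p \<noteq> []"
  shows "(\<Sum>\<sigma>\<in>Sym n. f (em p \<sigma>)) = (\<Sum>k\<le>n. of_nat (a_count p n k) * f k)"
proof -
  have "(\<Sum>\<sigma>\<in>Sym n. f (em p \<sigma>)) = (\<Sum>k\<le>n. \<Sum>\<sigma>\<in>{\<sigma> \<in> Sym n. em p \<sigma> = k}. f (em p \<sigma>))"
    by (rule sum.group[symmetric]) (use finite_Sym em_le_length[OF assms] length_Sym in auto)
  also have "\<dots> = (\<Sum>k\<le>n. of_nat (a_count p n k) * f k)"
    by (rule sum.cong) (auto simp: a_count_def)
  finally show ?thesis .
qed

lemma marked_count_eq_if_strongly_c_wilf_equiv:
  assumes "p \<noteq> []" "q \<noteq> []" "strongly_c_wilf_equiv p q"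
  shows "marked_count p n j = marked_count q n j"
  using assms sum_Sym_by_em[of _ "\<lambda>k. k choose j" n]
  by (simp add: marked_count_eq_sum_choose strongly_c_wilf_equiv_def)

lemma a_count_zero_eq_alternating_sum:
  assumes "p \<noteq> []"
  shows "int (a_count p n 0) = (\<Sum>j\<le>n. (-1) ^ j * int (marked_count p n j))"
proof -
  have alternating: "(\<Sum>j\<le>n. (-1::int) ^ j * int (k choose j)) = of_bool (k = 0)" if "k \<le> n" for k
  proof -
    have "(\<Sum>j\<le>n. (-1::int) ^ j * int (k choose j)) = (\<Sum>j\<le>k. (-1) ^ j * int (k choose j))"
      by (rule sum.mono_neutral_right) (use that in auto)
    then show ?thesis using choose_alternating_sum[of k] by (cases "k = 0") auto
  qed
  have "(\<Sum>j\<le>n. (-1) ^ j * int (marked_count p n j))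
      = (\<Sum>\<sigma>\<in>Sym n. \<Sum>j\<le>n. (-1) ^ j * int (em p \<sigma> choose j))"
    by (simp add: marked_count_eq_sum_choose[OF assms] sum_distrib_left sum.swap[of _ "Sym n"])
  also have "\<dots> = (\<Sum>\<sigma>\<in>Sym n. of_bool (em p \<sigma> = 0))"
  proof (rule sum.cong)
    fix \<sigma> assume "\<sigma> \<in> Sym n"
    then have "em p \<sigma> \<le> n" using em_le_length[OF assms] length_Sym by metis
    then show "(\<Sum>j\<le>n. (-1) ^ j * int (em p \<sigma> choose j)) = of_bool (em p \<sigma> = 0)"
      by (rule alternating)
  qed simp
  also have "\<dots> = int (a_count p n 0)"
    using finite_Sym by (simp add: a_count_def sum.If_cases Int_def)
  finally show ?thesis ..
qed

lemma c_wilf_equiv_if_marked_count_eq: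
  assumes "p \<noteq> []" "q \<noteq> []" "\<And>n j. marked_count p n j = marked_count q n j"
  shows "c_wilf_equiv p q"
proof -
  have "int (a_count p n 0) = int (a_count q n 0)" for n
    using assms(3) by (simp add: a_count_zero_eq_alternating_sum assms(1,2))
  then show ?thesis by (simp add: c_wilf_equiv_def)
qed

section \<open>Clusters\<close>

(* Positions \<open>y\<close> and \<open>y + 1\<close> both lie in the window \<open>[x, x + m)\<close> of a marked occurrence \<open>x\<close>. *)
definition linked :: "nat \<Rightarrow> nat set \<Rightarrow> nat \<Rightarrow> bool" where
  "linked m P y \<longleftrightarrow> (\<exists>x\<in>P. x \<le> y \<and> y + 2 \<le> x + m)"

definition clusters :: "nat list \<Rightarrow> nat \<Rightarrow> (nat list \<times> nat set) set" where
  "clusters p l = {(\<sigma>, P) \<in> marked p l. \<forall>y. y + 1 < l \<longrightarrow> linked (length p) P y}"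

definition cluster_count :: "nat list \<Rightarrow> nat \<Rightarrow> nat \<Rightarrow> nat" where
  "cluster_count p l k = card {(\<sigma>, P) \<in> clusters p l. card P = k}"

lemma finite_clusters: "p \<noteq> [] \<Longrightarrow> finite (clusters p l)"
  unfolding clusters_def by (rule finite_subset[OF _ finite_marked]) auto

lemma linked_mono: "linked m P y \<Longrightarrow> P \<subseteq> Q \<Longrightarrow> linked m Q y"
  unfolding linked_def by blast

(* No marked occurrence crosses position \<open>first_block m n P\<close>, so a marked permutation splits
   there into a cluster and a shorter marked permutation. *)
definition first_block :: "nat \<Rightarrow> nat \<Rightarrow> nat set \<Rightarrow> nat" where
  "first_block m n P = (LEAST l. 1 \<le> l \<and> (l = n \<or> \<not> linked m P (l - 1)))"

lemma first_block_spec: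
  assumes "1 \<le> n"
  shows "1 \<le> first_block m n P" "first_block m n P \<le> n"
    "\<And>y. y + 1 < first_block m n P \<Longrightarrow> linked m P y"
    "first_block m n P = n \<or> \<not> linked m P (first_block m n P - 1)"
proof -
  let ?Q = "\<lambda>l. 1 \<le> l \<and> (l = n \<or> \<not> linked m P (l - 1))"
  have "?Q n" using assms by simp
  then have "?Q (first_block m n P)" and le: "first_block m n P \<le> n"
    unfolding first_block_def by (rule LeastI, rule Least_le)
  then show "1 \<le> first_block m n P" "first_block m n P \<le> n"
    "first_block m n P = n \<or> \<not> linked m P (first_block m n P - 1)" by auto
  fix y assume y: "y + 1 < first_block m n P"
  then have "\<not> ?Q (y + 1)" unfolding first_block_def by (rule not_less_Least)
  then show "linked m P y" using y le by simp
qed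

lemma first_block_eqI:
  assumes "1 \<le> l" "l \<le> n" "\<And>y. y + 1 < l \<Longrightarrow> linked m P y" "l = n \<or> \<not> linked m P (l - 1)"
  shows "first_block m n P = l"
  unfolding first_block_def
proof (rule Least_equality)
  fix l' assume l': "1 \<le> l' \<and> (l' = n \<or> \<not> linked m P (l' - 1))"
  show "l \<le> l'"
  proof (rule ccontr)
    assume "\<not> l \<le> l'"
    then show False using assms(2) assms(3)[of "l' - 1"] l' by auto
  qed
qed (use assms in simp)

lemma occurrence_within_first_block:
  assumes n: "1 \<le> n" and "(\<sigma>, P) \<in> marked p n" and x: "x \<in> P" "x < first_block (length p) n P"
  shows "x + length p \<le> first_block (length p) n P"
proof (rule ccontr)
  let ?l = "first_block (length p) n P"
  assume "\<not> x + length p \<le> ?l"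
  moreover have "x + length p \<le> n"
    using marked_occurrence_fits assms(2) x(1) .
  ultimately have "\<not> linked (length p) P (?l - 1)"
    using first_block_spec(4)[OF n, of "length p" P] by auto
  moreover have "linked (length p) P (?l - 1)"
    unfolding linked_def using x \<open>\<not> x + length p \<le> ?l\<close> by (intro bexI[of _ x]) auto
  ultimately show False by simp
qed

definition split_marked ::
    "nat \<Rightarrow> nat list \<times> nat set \<Rightarrow> nat set \<times> (nat list \<times> nat set) \<times> (nat list \<times> nat set)" where
  "split_marked l = (\<lambda>(\<sigma>, P). (set (take l \<sigma>), (st (take l \<sigma>), {x \<in> P. x < l}),
                               (st (drop l \<sigma>), (\<lambda>x. x - l) ` {x \<in> P. l \<le> x})))"

definition join_marked ::
    "nat \<Rightarrow> nat \<Rightarrow> nat set \<times> (nat list \<times> nat set) \<times> (nat list \<times> nat set) \<Rightarrow> nat list \<times> nat set" where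
  "join_marked n l = (\<lambda>(V, (c, P1), (s, P2)).
     (destandardize V c @ destandardize ({1..n} - V) s, P1 \<union> (\<lambda>x. x + l) ` P2))"

lemma split_marked_mem:
  assumes p: "p \<noteq> []" and n: "1 \<le> n" and A: "(\<sigma>, P) \<in> marked p n"
    and l: "first_block (length p) n P = l"
  shows "split_marked l (\<sigma>, P) \<in> {V. V \<subseteq> {1..n} \<and> card V = l} \<times> clusters p l \<times> marked p (n - l)"
    and "card {x \<in> P. x < l} + card ((\<lambda>x. x - l) ` {x \<in> P. l \<le> x}) = card P"
proof -
  have \<sigma>: "\<sigma> \<in> Sym n" and P: "P \<subseteq> occurrences p \<sigma>" using A by (auto simp: marked_def)
  have len: "length \<sigma> = n" and dist: "distinct \<sigma>" and set\<sigma>: "set \<sigma> = {1..n}"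
    using \<sigma> length_Sym by (auto simp: Sym_iff)
  have l_le: "l \<le> n" using first_block_spec(2)[OF n, of "length p" P] l by simp
  have "{x \<in> P. x < l} \<subseteq> occurrences p (st (take l \<sigma>))"
    using P occurrence_within_first_block[OF n A] l
    by (auto simp: occurrences_def occurs_at_st occurs_at_take)
  moreover have "linked (length p) {x \<in> P. x < l} y" if y: "y + 1 < l" for y
  proof -
    obtain x where "x \<in> P" "x \<le> y" "y + 2 \<le> x + length p"
      using first_block_spec(3)[OF n, where m = "length p" and P = P] y l by (auto simp: linked_def)
    then show ?thesis using y unfolding linked_def by (intro bexI[of _ x]) auto
  qed
  moreover have "st (take l \<sigma>) \<in> Sym l"
    using st_in_Sym[of "take l \<sigma>"] dist len l_le by simp
  ultimately have "(st (take l \<sigma>), {x \<in> P. x < l}) \<in> clusters p l"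
    by (simp add: clusters_def marked_def)
  moreover have "(st (drop l \<sigma>), (\<lambda>x. x - l) ` {x \<in> P. l \<le> x}) \<in> marked p (n - l)"
    using P st_in_Sym[of "drop l \<sigma>"] dist len l_le
    by (auto simp: marked_def occurrences_def occurs_at_st occurs_at_drop)
  moreover have "set (take l \<sigma>) \<subseteq> {1..n}" "card (set (take l \<sigma>)) = l"
    using set\<sigma> dist len l_le set_take_subset[of l \<sigma>] by (auto simp: distinct_card)
  ultimately show "split_marked l (\<sigma>, P) \<in> {V. V \<subseteq> {1..n} \<and> card V = l} \<times> clusters p l \<times> marked p (n - l)"
    by (simp add: split_marked_def)
  show "card {x \<in> P. x < l} + card ((\<lambda>x. x - l) ` {x \<in> P. l \<le> x}) = card P"
    using P finite_occurrences[OF p] finite_subset by (blast intro: card_split_threshold)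
qed

lemma join_marked_mem:
  assumes V: "V \<subseteq> {1..n}" "card V = l"
    and C: "(c, P1) \<in> marked p l" and M: "(s, P2) \<in> marked p (n - l)"
  shows "join_marked n l (V, (c, P1), (s, P2)) \<in> marked p n"
proof -
  let ?W = "{1..n} - V"
  let ?\<sigma> = "destandardize V c @ destandardize ?W s"
  have fin: "finite V" "finite ?W" using V finite_subset by auto
  have c: "c \<in> Sym (card V)" "P1 \<subseteq> occurrences p c" using C V by (auto simp: marked_def)
  have s: "s \<in> Sym (card ?W)" "P2 \<subseteq> occurrences p s"
    using M V fin by (auto simp: marked_def card_Diff_subset)
  have len_c: "length (destandardize V c) = l" using c(1) V length_Sym by simp
  have "P1 \<subseteq> occurrences p ?\<sigma>"
  proof
    fix x assume x: "x \<in> P1"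
    then have "occurs_at p (destandardize V c) x"
      using c(2) occurs_at_destandardize[OF fin(1) c(1)] by (auto simp: occurrences_def)
    then show "x \<in> occurrences p ?\<sigma>"
      using marked_occurrence_fits[OF C x] occurs_at_append_left[of x p "destandardize V c"] len_c
      by (simp add: occurrences_def)
  qed
  moreover have "(\<lambda>x. x + l) ` P2 \<subseteq> occurrences p ?\<sigma>"
    using s(2) occurs_at_append_right[of p "destandardize V c", unfolded len_c]
      occurs_at_destandardize[OF fin(2) s(1)]
    by (auto simp: occurrences_def add.commute)
  ultimately show ?thesis
    using destandardize_append_Sym[OF V(1) c(1) s(1)] by (simp add: join_marked_def marked_def)
qed

lemma first_block_join:
  assumes l: "1 \<le> l" "l \<le> n" and C: "(c, P1) \<in> clusters p l"
  shows "first_block (length p) n (P1 \<union> (\<lambda>x. x + l) ` P2) = l"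
proof (rule first_block_eqI)
  show "linked (length p) (P1 \<union> (\<lambda>x. x + l) ` P2) y" if "y + 1 < l" for y
    using C that linked_mono by (fastforce simp: clusters_def)
  have "(c, P1) \<in> marked p l" using C by (simp add: clusters_def)
  then show "l = n \<or> \<not> linked (length p) (P1 \<union> (\<lambda>x. x + l) ` P2) (l - 1)"
    using marked_occurrence_fits l by (fastforce simp: linked_def)
qed (use l in auto)

lemma join_split_marked:
  assumes "(\<sigma>, P) \<in> marked p n"
  shows "join_marked n l (split_marked l (\<sigma>, P)) = (\<sigma>, P)"
proof -
  have dist: "distinct \<sigma>" and set\<sigma>: "set \<sigma> = {1..n}" using assms by (auto simp: marked_def Sym_iff)
  have "set (take l \<sigma>) \<union> set (drop l \<sigma>) = {1..n}" "set (take l \<sigma>) \<inter> set (drop l \<sigma>) = {}"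
    using dist set\<sigma> by (metis append_take_drop_id set_append, metis append_take_drop_id distinct_append)
  then have "{1..n} - set (take l \<sigma>) = set (drop l \<sigma>)" by blast
  then have "destandardize (set (take l \<sigma>)) (st (take l \<sigma>))
      @ destandardize ({1..n} - set (take l \<sigma>)) (st (drop l \<sigma>)) = \<sigma>"
    using dist by (simp add: destandardize_st)
  moreover have "{x \<in> P. x < l} \<union> (\<lambda>x. x + l) ` (\<lambda>x. x - l) ` {x \<in> P. l \<le> x} = P"
    by (auto simp: image_image image_iff)
  ultimately show ?thesis by (simp add: split_marked_def join_marked_def)
qed

lemma split_join_marked:
  assumes p: "p \<noteq> []" and V: "V \<subseteq> {1..n}" "card V = l"
    and C: "(c, P1) \<in> marked p l" and M: "(s, P2) \<in> marked p (n - l)"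
  shows "split_marked l (join_marked n l (V, (c, P1), (s, P2))) = (V, (c, P1), (s, P2))"
proof -
  let ?W = "{1..n} - V"
  have fin: "finite V" "finite ?W" using V finite_subset by auto
  have c: "c \<in> Sym (card V)" using C V by (auto simp: marked_def)
  have s: "s \<in> Sym (card ?W)" using M V fin by (auto simp: marked_def card_Diff_subset)
  have len_c: "length (destandardize V c) = l" using c V length_Sym by simp
  have P1_less: "x < l" if "x \<in> P1" for x
    using marked_occurrence_fits[OF C that] p by (cases p) auto
  then have "{x \<in> P1 \<union> (\<lambda>x. x + l) ` P2. x < l} = P1" by auto
  moreover have "{x \<in> P1 \<union> (\<lambda>x. x + l) ` P2. l \<le> x} = (\<lambda>x. x + l) ` P2"
    using P1_less by force
  ultimately show ?thesis
    using len_c set_destandardize[OF fin(1) c(1)] st_destandardize[OF fin(1) c(1)]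
      st_destandardize[OF fin(2) s]
    by (simp add: split_marked_def join_marked_def image_image)
qed

lemma bij_betw_split_marked:
  assumes p: "p \<noteq> []" and l: "1 \<le> l" "l \<le> n"
  shows "bij_betw (split_marked l) {(\<sigma>, P) \<in> marked p n. first_block (length p) n P = l}
    ({V. V \<subseteq> {1..n} \<and> card V = l} \<times> clusters p l \<times> marked p (n - l))"
proof (rule bij_betwI[where g = "join_marked n l"])
  show "split_marked l \<in> {(\<sigma>, P) \<in> marked p n. first_block (length p) n P = l}
    \<rightarrow> {V. V \<subseteq> {1..n} \<and> card V = l} \<times> clusters p l \<times> marked p (n - l)"
    using split_marked_mem(1)[OF p] l by fastforce
  show "join_marked n l \<in> {V. V \<subseteq> {1..n} \<and> card V = l} \<times> clusters p l \<times> marked p (n - l)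
    \<rightarrow> {(\<sigma>, P) \<in> marked p n. first_block (length p) n P = l}"
  proof
    fix B assume "B \<in> {V. V \<subseteq> {1..n} \<and> card V = l} \<times> clusters p l \<times> marked p (n - l)"
    then obtain V c P1 s P2 where "B = (V, (c, P1), (s, P2))" "V \<subseteq> {1..n}" "card V = l"
      "(c, P1) \<in> clusters p l" "(s, P2) \<in> marked p (n - l)" by auto
    then show "join_marked n l B \<in> {(\<sigma>, P) \<in> marked p n. first_block (length p) n P = l}"
      using join_marked_mem first_block_join[OF l] by (auto simp: join_marked_def clusters_def)
  qed
  show "join_marked n l (split_marked l A) = A"
    if "A \<in> {(\<sigma>, P) \<in> marked p n. first_block (length p) n P = l}" for A
    using that join_split_marked by auto
  show "split_marked l (join_marked n l B) = B"
    if "B \<in> {V. V \<subseteq> {1..n} \<and> card V = l} \<times> clusters p l \<times> marked p (n - l)" for B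
    using that split_join_marked[OF p] by (auto simp: clusters_def)
qed

lemma card_marked_with_first_block:
  assumes p: "p \<noteq> []" and l: "1 \<le> l" "l \<le> n"
  shows "card {(\<sigma>, P) \<in> marked p n. card P = j \<and> first_block (length p) n P = l}
    = (n choose l) * (\<Sum>k\<le>j. cluster_count p l k * marked_count p (n - l) (j - k))"
proof -
  let ?Vs = "{V. V \<subseteq> {1..n} \<and> card V = l}"
  let ?w = "\<lambda>(V :: nat set, (c :: nat list, P1 :: nat set), (s :: nat list, P2 :: nat set)).
    card P1 + card P2"
  have "?w (split_marked l A) = card (snd A)"
    if A: "A \<in> {(\<sigma>, P) \<in> marked p n. first_block (length p) n P = l}" for A
  proof -
    obtain \<sigma> P where "A = (\<sigma>, P)" "(\<sigma>, P) \<in> marked p n" "first_block (length p) n P = l"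
      using A by auto
    then show ?thesis
      using split_marked_mem(2)[OF p _ \<open>(\<sigma>, P) \<in> marked p n\<close>] l by (simp add: split_marked_def)
  qed
  then have "bij_betw (split_marked l)
      {A \<in> {(\<sigma>, P) \<in> marked p n. first_block (length p) n P = l}. card (snd A) = j}
      {B \<in> ?Vs \<times> clusters p l \<times> marked p (n - l). ?w B = j}"
    by (intro bij_betw_Collect[OF bij_betw_split_marked[OF p l]]) auto
  moreover have "{A \<in> {(\<sigma>, P) \<in> marked p n. first_block (length p) n P = l}. card (snd A) = j}
      = {(\<sigma>, P) \<in> marked p n. card P = j \<and> first_block (length p) n P = l}"
    by auto
  moreover have "{B \<in> ?Vs \<times> clusters p l \<times> marked p (n - l). ?w B = j}
      = ?Vs \<times> {(C, M) \<in> clusters p l \<times> marked p (n - l). card (snd C) + card (snd M) = j}"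
    by auto
  ultimately have "card {(\<sigma>, P) \<in> marked p n. card P = j \<and> first_block (length p) n P = l}
      = card ?Vs * card {(C, M) \<in> clusters p l \<times> marked p (n - l). card (snd C) + card (snd M) = j}"
    by (simp add: bij_betw_same_card card_cartesian_product)
  also have "card {(C, M) \<in> clusters p l \<times> marked p (n - l). card (snd C) + card (snd M) = j}
      = (\<Sum>k\<le>j. card {C \<in> clusters p l. card (snd C) = k}
          * card {M \<in> marked p (n - l). card (snd M) = j - k})"
    by (rule card_Collect_plus_eq_sum[OF finite_clusters[OF p] finite_marked[OF p]])
  also have "\<dots> = (\<Sum>k\<le>j. cluster_count p l k * marked_count p (n - l) (j - k))"
    by (simp add: cluster_count_def marked_count_def case_prod_beta')
  finally show ?thesis
    by (simp add: n_subsets)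
qed

lemma marked_count_rec:
  assumes p: "p \<noteq> []" and n: "1 \<le> n"
  shows "marked_count p n j
    = (\<Sum>l=1..n. (n choose l) * (\<Sum>k\<le>j. cluster_count p l k * marked_count p (n - l) (j - k)))"
proof -
  have "{(\<sigma>, P) \<in> marked p n. card P = j}
      = (\<Union>l\<in>{1..n}. {(\<sigma>, P) \<in> marked p n. card P = j \<and> first_block (length p) n P = l})"
    using first_block_spec(1,2)[OF n] by auto
  then have "marked_count p n j
      = (\<Sum>l=1..n. card {(\<sigma>, P) \<in> marked p n. card P = j \<and> first_block (length p) n P = l})"
    unfolding marked_count_def
    by (auto intro!: card_UN_disjoint finite_subset[OF _ finite_marked[OF p]])
  then show ?thesis
    by (simp add: card_marked_with_first_block[OF p])
qed

lemma marked_count_0: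
  assumes "p \<noteq> []"
  shows "marked_count p 0 j = of_bool (j = 0)"
  using occurrences_subset[OF assms, of "[]"]
  by (simp add: marked_count_eq_sum_choose[OF assms] Sym_0 em_eq_card_occurrences)

lemma marked_count_eq_sum_plus_cluster_count:
  assumes p: "p \<noteq> []" and l: "1 \<le> l"
  shows "marked_count p l k
    = (\<Sum>l'=1..<l. (l choose l') * (\<Sum>k'\<le>k. cluster_count p l' k' * marked_count p (l - l') (k - k')))
      + cluster_count p l k"
proof -
  have "(\<Sum>k'\<le>k. cluster_count p l k' * marked_count p 0 (k - k'))
      = (\<Sum>k'\<le>k. if k' = k then cluster_count p l k else 0)"
    by (rule sum.cong) (auto simp: marked_count_0[OF p])
  also have "\<dots> = cluster_count p l k" by simp
  moreover have "{1..l} = insert l {1..<l}" using l by auto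
  ultimately show ?thesis
    unfolding marked_count_rec[OF p l, of k] by simp
qed

lemma cluster_count_eq_if_marked_count_eq:
  assumes "p \<noteq> []" "q \<noteq> []" "\<And>n j. marked_count p n j = marked_count q n j"
  shows "1 \<le> l \<Longrightarrow> cluster_count p l k = cluster_count q l k"
proof (induction l arbitrary: k rule: less_induct)
  case (less l)
  then have "(\<Sum>l'=1..<l. (l choose l') * (\<Sum>k'\<le>k. cluster_count p l' k' * marked_count p (l - l') (k - k')))
      = (\<Sum>l'=1..<l. (l choose l') * (\<Sum>k'\<le>k. cluster_count q l' k' * marked_count q (l - l') (k - k')))"
    using assms(3) by (intro sum.cong) simp_all
  then show ?case
    using marked_count_eq_sum_plus_cluster_count[OF assms(1) less.prems, of k]
      marked_count_eq_sum_plus_cluster_count[OF assms(2) less.prems, of k] assms(3)[of l k]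
    by simp
qed

lemma marked_count_eq_if_cluster_count_eq:
  assumes "p \<noteq> []" "q \<noteq> []" "\<And>l k. 1 \<le> l \<Longrightarrow> cluster_count p l k = cluster_count q l k"
  shows "marked_count p n j = marked_count q n j"
proof (induction n arbitrary: j rule: less_induct)
  case (less n)
  show ?case
  proof (cases "n = 0")
    case True
    then show ?thesis by (simp add: marked_count_0 assms(1,2))
  next
    case False
    then have "1 \<le> n" by simp
    then show ?thesis
      unfolding marked_count_rec[OF assms(1) \<open>1 \<le> n\<close>] marked_count_rec[OF assms(2) \<open>1 \<le> n\<close>]
      using less.IH assms(3) by (intro sum.cong) simp_all
  qed
qed

section \<open>Chains\<close>

lemma cluster_windows:
  assumes C: "(\<sigma>, P) \<in> clusters p l" and m: "2 \<le> length p"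
  shows "(\<Union>x\<in>P. {x..<x + (length p - 1)}) = {..<l - 1}"
proof
  have len: "length \<sigma> = l" using C length_Sym by (auto simp: clusters_def marked_def)
  show "(\<Union>x\<in>P. {x..<x + (length p - 1)}) \<subseteq> {..<l - 1}"
  proof
    fix y assume "y \<in> (\<Union>x\<in>P. {x..<x + (length p - 1)})"
    then obtain x where x: "x \<in> P" "x \<le> y" "y < x + (length p - 1)" by auto
    then have "x + length p \<le> l"
      using C len by (auto simp: clusters_def marked_def occurrences_def occurs_at_def)
    then show "y \<in> {..<l - 1}" using x m by simp
  qed
  show "{..<l - 1} \<subseteq> (\<Union>x\<in>P. {x..<x + (length p - 1)})"
  proof
    fix y assume "y \<in> {..<l - 1}"
    then have "linked (length p) P y" using C by (auto simp: clusters_def)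
    then show "y \<in> (\<Union>x\<in>P. {x..<x + (length p - 1)})" by (auto simp: linked_def)
  qed
qed

lemma finite_cluster_marks: "(\<sigma>, P) \<in> clusters p l \<Longrightarrow> p \<noteq> [] \<Longrightarrow> finite P"
  using finite_occurrences[of p \<sigma>] finite_subset by (auto simp: clusters_def marked_def)

definition chain_count :: "nat list \<Rightarrow> nat \<Rightarrow> nat" where
  "chain_count p k = card {\<sigma> \<in> Sym (k * (length p - 1) + 1). \<forall>i<k. occurs_at p \<sigma> (i * (length p - 1))}"

lemma cluster_count_chain:
  assumes m: "2 \<le> length p"
  shows "cluster_count p (k * (length p - 1) + 1) k = chain_count p k"
proof -
  let ?c = "length p - 1" let ?l = "k * ?c + 1"
  let ?chain = "(\<lambda>i. i * ?c) ` {..<k}"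
  have card_chain: "card ?chain = k" using m by (simp add: card_image inj_on_def)
  have "{(\<sigma>, P) \<in> clusters p ?l. card P = k}
      = (\<lambda>\<sigma>. (\<sigma>, ?chain)) ` {\<sigma> \<in> Sym ?l. \<forall>i<k. occurs_at p \<sigma> (i * ?c)}"
  proof (intro set_eqI iffI)
    fix A assume "A \<in> {(\<sigma>, P) \<in> clusters p ?l. card P = k}"
    then obtain \<sigma> P where A: "A = (\<sigma>, P)" "(\<sigma>, P) \<in> clusters p ?l" "card P = k" by auto
    have "(\<Union>x\<in>P. {x..<x + ?c}) = {..<card P * ?c}"
      using cluster_windows[OF A(2) m] A(3) by simp
    moreover have "p \<noteq> []" "0 < ?c" using m by auto
    ultimately have "P = ?chain"
      using interval_tiling_eq_multiples[OF finite_cluster_marks[OF A(2)], of ?c] A(3) by simp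
    then show "A \<in> (\<lambda>\<sigma>. (\<sigma>, ?chain)) ` {\<sigma> \<in> Sym ?l. \<forall>i<k. occurs_at p \<sigma> (i * ?c)}"
      using A by (auto simp: clusters_def marked_def occurrences_def)
  next
    fix A assume "A \<in> (\<lambda>\<sigma>. (\<sigma>, ?chain)) ` {\<sigma> \<in> Sym ?l. \<forall>i<k. occurs_at p \<sigma> (i * ?c)}"
    then obtain \<sigma> where A: "A = (\<sigma>, ?chain)" "\<sigma> \<in> Sym ?l" "\<forall>i<k. occurs_at p \<sigma> (i * ?c)" by auto
    have "linked (length p) ?chain y" if "y + 1 < ?l" for y
    proof -
      have "y div ?c < k" using that m by (simp add: div_less_iff_less_mult)
      moreover have "y div ?c * ?c \<le> y" "y < y div ?c * ?c + ?c"
        using m div_mult_mod_eq[of y ?c] mod_less_divisor[of ?c y] by linarith+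
      ultimately show ?thesis
        unfolding linked_def using m by (intro bexI[of _ "y div ?c * ?c"]) auto
    qed
    then show "A \<in> {(\<sigma>, P) \<in> clusters p ?l. card P = k}"
      using A card_chain by (auto simp: clusters_def marked_def occurrences_def)
  qed
  then show ?thesis
    unfolding cluster_count_def chain_count_def by (simp add: card_image inj_on_def)
qed

lemma non_overlapping_occurrences_apart:
  assumes no: "non_overlapping p" and x: "occurs_at p \<sigma> x" and x': "occurs_at p \<sigma> x'"
    and less: "x < x'"
  shows "length p - 1 \<le> x' - x"
proof (rule ccontr)
  let ?m = "length p" and ?d = "x' - x"
  let ?u = "take ?m (drop x \<sigma>)" and ?v = "take ?m (drop x' \<sigma>)"
  assume "\<not> ?m - 1 \<le> ?d"
  then have d: "1 \<le> ?d" "?d < ?m - 1" using less by auto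
  have "drop ?d ?u = take (?m - ?d) ?v"
    using less by (simp add: drop_take add.commute)
  moreover have "st ?u = p" "st ?v = p" using x x' by (auto simp: occurs_at_def)
  ultimately have "st (drop ?d p) = st (take (?m - ?d) p)"
    using st_take_drop_st[of "?m - ?d" 0 ?v] st_take_drop_st[of ?m ?d ?u] by simp
  then have "?d \<in> overlap_set p" using d by (simp add: overlap_set_def)
  then show False using no d by (simp add: non_overlapping_def)
qed

lemma cluster_length_non_overlapping:
  assumes C: "(\<sigma>, P) \<in> clusters p l" and m: "2 \<le> length p" and no: "non_overlapping p"
  shows "l - 1 = card P * (length p - 1)"
proof -
  have occ: "P \<subseteq> occurrences p \<sigma>" using C by (auto simp: clusters_def marked_def)
  have fin: "finite P" using finite_cluster_marks[OF C] m by fastforce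
  have "{x..<x + (length p - 1)} \<inter> {y..<y + (length p - 1)} = {}"
    if "x \<in> P" "y \<in> P" "x < y" for x y
  proof -
    have "length p - 1 \<le> y - x"
      using non_overlapping_occurrences_apart[OF no _ _ \<open>x < y\<close>] occ that
      by (auto simp: occurrences_def)
    then show ?thesis by auto
  qed
  then have "\<forall>x\<in>P. \<forall>y\<in>P. x \<noteq> y \<longrightarrow> {x..<x + (length p - 1)} \<inter> {y..<y + (length p - 1)} = {}"
    by (metis inf_commute linorder_neqE_nat)
  then have "card (\<Union>x\<in>P. {x..<x + (length p - 1)}) = (\<Sum>x\<in>P. card {x..<x + (length p - 1)})"
    using fin by (intro card_UN_disjoint) auto
  then have "card (\<Union>x\<in>P. {x..<x + (length p - 1)}) = card P * (length p - 1)"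
    by simp
  then show ?thesis using cluster_windows[OF C m] by simp
qed

lemma cluster_count_non_overlapping:
  assumes m: "2 \<le> length p" and no: "non_overlapping p" and l: "1 \<le> l" "l \<noteq> k * (length p - 1) + 1"
  shows "cluster_count p l k = 0"
proof -
  have "{(\<sigma>, P) \<in> clusters p l. card P = k} = {}"
    using cluster_length_non_overlapping[OF _ m no] l by fastforce
  then show ?thesis unfolding cluster_count_def by (metis card.empty)
qed

lemma cluster_count_eq_if_chain_count_eq:
  assumes m: "2 \<le> length p" "length q = length p"
    and no: "non_overlapping p" "non_overlapping q"
    and chain: "\<And>k. chain_count p k = chain_count q k" and l: "1 \<le> l"
  shows "cluster_count p l k = cluster_count q l k"
proof (cases "l = k * (length p - 1) + 1")
  case True
  then show ?thesis using cluster_count_chain[of p k] cluster_count_chain[of q k] m chain by simp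
next
  case False
  then show ?thesis using cluster_count_non_overlapping m no l by simp
qed

lemma chain_count_eq_if_strongly_c_wilf_equiv:
  assumes m: "2 \<le> length p" "length q = length p" and strong: "strongly_c_wilf_equiv p q"
  shows "chain_count p k = chain_count q k"
proof -
  have "p \<noteq> []" "q \<noteq> []" using m by auto
  then have "cluster_count p l k = cluster_count q l k" if "1 \<le> l" for l
    using marked_count_eq_if_strongly_c_wilf_equiv[OF _ _ strong] that
    by (intro cluster_count_eq_if_marked_count_eq) auto
  then show ?thesis
    using cluster_count_chain[of p k] cluster_count_chain[of q k] m by simp
qed

lemma c_wilf_equiv_if_chain_count_eq:
  assumes m: "2 \<le> length p" "length q = length p"
    and "non_overlapping p" "non_overlapping q" "\<And>k. chain_count p k = chain_count q k"
  shows "c_wilf_equiv p q"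
proof -
  have "p \<noteq> []" "q \<noteq> []" using m by auto
  then show ?thesis
    using cluster_count_eq_if_chain_count_eq[OF assms]
    by (intro c_wilf_equiv_if_marked_count_eq marked_count_eq_if_cluster_count_eq) auto
qed

section \<open>Chain numbers depend only on the first and last entries\<close>

definition reindex :: "(nat \<Rightarrow> nat) \<Rightarrow> nat list \<Rightarrow> nat list" where
  "reindex f \<sigma> = map (\<lambda>t. \<sigma> ! f t) [0..<length \<sigma>]"

lemma length_reindex [simp]: "length (reindex f \<sigma>) = length \<sigma>"
  by (simp add: reindex_def)

lemma nth_reindex: "t < length \<sigma> \<Longrightarrow> reindex f \<sigma> ! t = \<sigma> ! f t"
  by (simp add: reindex_def)

lemma set_reindex:
  assumes "bij_betw f {..<length \<sigma>} {..<length \<sigma>}"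
  shows "set (reindex f \<sigma>) = set \<sigma>"
proof -
  have "set (reindex f \<sigma>) = (!) \<sigma> ` f ` {..<length \<sigma>}"
    by (auto simp: reindex_def)
  also have "\<dots> = set \<sigma>"
    using assms by (simp add: bij_betw_def set_conv_nth) blast
  finally show ?thesis .
qed

lemma st_reindex:
  assumes "bij_betw f {..<length w} {..<length w}"
  shows "st (reindex f w) = reindex f (st w)"
proof -
  have "set (reindex f w) = set w" by (rule set_reindex[OF assms])
  then show ?thesis
    unfolding st_conv_rank_in using bij_betwE[OF assms] by (simp add: reindex_def)
qed

lemma reindex_Sym:
  assumes f: "bij_betw f {..<n} {..<n}" and \<sigma>: "\<sigma> \<in> Sym n"
  shows "reindex f \<sigma> \<in> Sym n"
proof -
  have "distinct (reindex f \<sigma>)"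
    using \<sigma> f bij_betwE[OF f] length_Sym[OF \<sigma>] unfolding reindex_def distinct_map bij_betw_def
    by (auto simp: Sym_iff inj_on_def nth_eq_iff_index_eq)
  then show ?thesis
    using \<sigma> f set_reindex[of f \<sigma>] length_Sym[OF \<sigma>] by (simp add: Sym_iff)
qed

lemma inj_on_reindex:
  assumes "bij_betw f {..<n} {..<n}"
  shows "inj_on (reindex f) (Sym n)"
proof (rule inj_onI)
  fix \<sigma> \<tau> assume \<sigma>: "\<sigma> \<in> Sym n" and \<tau>: "\<tau> \<in> Sym n" and eq: "reindex f \<sigma> = reindex f \<tau>"
  have "\<sigma> ! f t = \<tau> ! f t" if "t < n" for t
    using arg_cong[OF eq, of "\<lambda>w. w ! t"] that length_Sym[OF \<sigma>] length_Sym[OF \<tau>]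
    by (simp add: nth_reindex)
  then have "\<sigma> ! s = \<tau> ! s" if "s < n" for s
    using that bij_betw_imp_surj_on[OF assms] by (metis imageE lessThan_iff)
  then show "\<sigma> = \<tau>"
    using length_Sym[OF \<sigma>] length_Sym[OF \<tau>] by (simp add: nth_equalityI)
qed

locale same_ends =
  fixes p q :: "nat list" and m :: nat
  assumes p: "p \<in> Sym m" and q: "q \<in> Sym m" and m: "2 \<le> m"
    and first: "p ! 0 = q ! 0" and last: "p ! (m - 1) = q ! (m - 1)"
begin

definition psi :: "nat \<Rightarrow> nat" where
  "psi j = the_inv_into {..<m} ((!) p) (q ! j)"

lemma bij_psi: "bij_betw psi {..<m} {..<m}"
proof -
  have "bij_betw ((!) p) {..<m} {1..m}" "bij_betw ((!) q) {..<m} {1..m}"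
    using p q by (blast intro: bij_betw_nth_Sym)+
  then have "bij_betw (the_inv_into {..<m} ((!) p) \<circ> (!) q) {..<m} {..<m}"
    by (intro bij_betw_trans bij_betw_the_inv_into)
  then show ?thesis by (simp add: psi_def[abs_def] comp_def)
qed

lemma nth_psi: "j < m \<Longrightarrow> p ! psi j = q ! j"
  using nth_Sym_bounds[OF q, of j] unfolding psi_def
  by (intro f_the_inv_into_f_bij_betw[OF bij_betw_nth_Sym[OF p]]) simp

lemma psi_eq_iff:
  assumes "i < m" "j < m"
  shows "psi j = i \<longleftrightarrow> q ! j = p ! i"
proof -
  have "psi j < m" using assms bij_betwE[OF bij_psi] by simp
  then show ?thesis
    using assms nth_psi[of j] p length_Sym[OF p] by (auto simp: Sym_iff nth_eq_iff_index_eq)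
qed

lemma psi_0: "psi 0 = 0"
  using psi_eq_iff[of 0 0] first m by simp

lemma psi_last: "psi (m - 1) = m - 1"
  using psi_eq_iff[of "m - 1" "m - 1"] last m by simp

lemma psi_less:
  assumes "r < m - 1"
  shows "psi r < m - 1"
proof -
  have "q ! r \<noteq> q ! (m - 1)"
    using assms q length_Sym[OF q] by (simp add: Sym_iff nth_eq_iff_index_eq)
  then have "psi r \<noteq> m - 1" using psi_eq_iff[of "m - 1" r] assms last by simp
  moreover have "psi r < m" using assms bij_betwE[OF bij_psi] by simp
  ultimately show ?thesis by simp
qed

(* \<open>psi\<close> fixes both ends of a window, so applying it inside every window of a chain is
   consistent on the entries shared by consecutive windows. *)
definition Psi :: "nat \<Rightarrow> nat" where
  "Psi t = t div (m - 1) * (m - 1) + psi (t mod (m - 1))"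

lemma Psi_block:
  assumes "j < m"
  shows "Psi (i * (m - 1) + j) = i * (m - 1) + psi j"
proof -
  have block: "Psi (i' * (m - 1) + r) = i' * (m - 1) + psi r" if "r < m - 1" for i' r
    using that by (simp add: Psi_def)
  show ?thesis
  proof (cases "j = m - 1")
    case True
    then have "Psi (i * (m - 1) + j) = Psi (Suc i * (m - 1) + 0)" by (simp add: add.commute)
    also have "\<dots> = Suc i * (m - 1) + psi 0" by (rule block) (use m in simp)
    also have "\<dots> = i * (m - 1) + psi j" using True psi_0 psi_last by simp
    finally show ?thesis .
  next
    case False
    then show ?thesis using assms block by simp
  qed
qed

lemma Psi_less:
  assumes "t < k * (m - 1) + 1"
  shows "Psi t < k * (m - 1) + 1"
proof -
  let ?c = "m - 1"
  have mod: "t mod ?c < ?c" using m by simp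
  show ?thesis
  proof (cases "t div ?c < k")
    case True
    then have "t div ?c * ?c + ?c \<le> k * ?c" using mult_le_mono1[of "Suc (t div ?c)" k ?c] by simp
    then show ?thesis using Psi_def[of t] psi_less[OF mod] by linarith
  next
    case False
    then have "k * ?c \<le> t div ?c * ?c" by simp
    then have "t = k * ?c" using assms div_mult_mod_eq[of t ?c] by linarith
    then show ?thesis using Psi_block[of 0 k] psi_0 m by simp
  qed
qed

lemma inj_Psi: "inj Psi"
proof (rule injI)
  let ?c = "m - 1"
  fix s t assume "Psi s = Psi t"
  then have eq: "s div ?c * ?c + psi (s mod ?c) = t div ?c * ?c + psi (t mod ?c)"
    by (simp add: Psi_def)
  have mod: "r mod ?c < ?c" "r mod ?c < m" for r
  proof -
    show "r mod ?c < ?c" using m by simp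
    then show "r mod ?c < m" by linarith
  qed
  have "(a * ?c + psi (r mod ?c)) div ?c = a" "(a * ?c + psi (r mod ?c)) mod ?c = psi (r mod ?c)" for a r
    using psi_less[OF mod(1)[of r]] by simp_all
  then have "s div ?c = t div ?c" "psi (s mod ?c) = psi (t mod ?c)"
    using arg_cong[OF eq, of "\<lambda>x. x div ?c"] arg_cong[OF eq, of "\<lambda>x. x mod ?c"] by simp_all
  then have "s div ?c = t div ?c" "s mod ?c = t mod ?c"
    using bij_betw_imp_inj_on[OF bij_psi] mod(2) by (auto simp: inj_on_def)
  then show "s = t" using div_mult_mod_eq by metis
qed

lemma bij_Psi: "bij_betw Psi {..<k * (m - 1) + 1} {..<k * (m - 1) + 1}"
  unfolding bij_betw_def
  using Psi_less inj_on_subset[OF inj_Psi] endo_inj_surj[of "{..<k * (m - 1) + 1}" Psi]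
  by (metis finite_lessThan image_subsetI lessThan_iff subset_UNIV)

lemma occurs_at_reindex_Psi:
  assumes \<sigma>: "\<sigma> \<in> Sym (k * (m - 1) + 1)" and i: "i < k" and occ: "occurs_at p \<sigma> (i * (m - 1))"
  shows "occurs_at q (reindex Psi \<sigma>) (i * (m - 1))"
proof -
  let ?c = "m - 1"
  let ?w = "take m (drop (i * ?c) \<sigma>)"
  have "Suc i * ?c \<le> k * ?c" using i by (intro mult_le_mono1) simp
  then have fits: "i * ?c + m \<le> length \<sigma>" using length_Sym[OF \<sigma>] m by simp
  then have len_w: "length ?w = m" by simp
  have "take m (drop (i * ?c) (reindex Psi \<sigma>)) = reindex psi ?w"
  proof (rule nth_equalityI)
    fix j assume "j < length (take m (drop (i * ?c) (reindex Psi \<sigma>)))"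
    then have j: "j < m" using fits by simp
    moreover have "psi j < m" using j bij_betwE[OF bij_psi] by simp
    ultimately show "take m (drop (i * ?c) (reindex Psi \<sigma>)) ! j = reindex psi ?w ! j"
      using fits Psi_block[OF j, of i] by (simp add: nth_reindex len_w)
  qed (simp add: len_w fits)
  also have "st \<dots> = reindex psi (st ?w)"
    using bij_psi len_w by (simp add: st_reindex)
  also have "\<dots> = q"
    using occ length_Sym[OF p] length_Sym[OF q] nth_psi
    by (auto simp: occurs_at_def reindex_def intro: nth_equalityI)
  finally show ?thesis
    using fits length_Sym[OF q] by (simp add: occurs_at_def)
qed

lemma chain_count_le: "chain_count p k \<le> chain_count q k"
proof -
  let ?N = "k * (m - 1) + 1"
  let ?A = "{\<sigma> \<in> Sym ?N. \<forall>i<k. occurs_at p \<sigma> (i * (m - 1))}"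
  let ?B = "{\<sigma> \<in> Sym ?N. \<forall>i<k. occurs_at q \<sigma> (i * (m - 1))}"
  have "inj_on (reindex Psi) ?A"
    using inj_on_reindex[OF bij_Psi] by (rule inj_on_subset) auto
  moreover have "reindex Psi ` ?A \<subseteq> ?B"
    using reindex_Sym[OF bij_Psi] occurs_at_reindex_Psi by auto
  ultimately have "card ?A \<le> card ?B"
    using finite_Sym by (intro card_inj_on_le) auto
  then show ?thesis
    using length_Sym[OF p] length_Sym[OF q] by (simp add: chain_count_def)
qed

end

lemma chain_count_eq_if_same_ends:
  assumes "p \<in> Sym m" "q \<in> Sym m" "2 \<le> m" "p ! 0 = q ! 0" "p ! (m - 1) = q ! (m - 1)"
  shows "chain_count p k = chain_count q k"
  using same_ends.chain_count_le[of p q m k] same_ends.chain_count_le[of q p m k] assms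
  by (simp add: same_ends_def)

section \<open>Chains of two occurrences\<close>

locale two_chain =
  fixes p :: "nat list" and m :: nat
  assumes p: "p \<in> Sym m" and m: "2 \<le> m"
begin

abbreviation "a \<equiv> p ! 0"
abbreviation "b \<equiv> p ! (m - 1)"
abbreviation "N \<equiv> 2 * m - 1"
abbreviation "x \<equiv> a + b - 1"

lemma length_p: "length p = m"
  using p length_Sym by blast

lemma ends_bounds: "1 \<le> a" "a \<le> m" "1 \<le> b" "b \<le> m" "a \<noteq> b"
  using nth_Sym_bounds[OF p, of 0] nth_Sym_bounds[OF p, of "m - 1"] m p length_p
  by (auto simp: Sym_iff nth_eq_iff_index_eq)

definition chains :: "nat list set" where
  "chains = {\<sigma> \<in> Sym N. occurs_at p \<sigma> 0 \<and> occurs_at p \<sigma> (m - 1)}"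

definition first_windows :: "nat set set" where
  "first_windows = {S. S \<subseteq> {1..N} \<and> x \<in> S \<and> card {v \<in> S. v < x} = b - 1 \<and> card {v \<in> S. x < v} = m - b}"

lemma chain_count_2: "chain_count p 2 = card chains"
proof -
  have "2 * (m - 1) + 1 = N" using m by simp
  moreover have "(\<forall>i<2. occurs_at p \<sigma> (i * (m - 1))) \<longleftrightarrow> occurs_at p \<sigma> 0 \<and> occurs_at p \<sigma> (m - 1)" for \<sigma>
    by (auto simp: less_2_cases_iff)
  ultimately show ?thesis by (simp add: chain_count_def chains_def length_p)
qed

lemma chain_windows:
  assumes "\<sigma> \<in> chains"
  shows "st (take m \<sigma>) = p" "st (drop (m - 1) \<sigma>) = p" "length \<sigma> = N" "distinct \<sigma>" "set \<sigma> = {1..N}"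
proof -
  show len: "length \<sigma> = N" and "distinct \<sigma>" "set \<sigma> = {1..N}"
    using assms length_Sym by (auto simp: chains_def Sym_iff)
  show "st (take m \<sigma>) = p" "st (drop (m - 1) \<sigma>) = p"
    using assms len m by (auto simp: chains_def occurs_at_def length_p)
qed

lemma chain_split:
  assumes "\<sigma> \<in> chains"
  shows "take m \<sigma> = take (m - 1) \<sigma> @ [\<sigma> ! (m - 1)]" "drop (m - 1) \<sigma> = \<sigma> ! (m - 1) # drop m \<sigma>"
    "\<sigma> = take (m - 1) \<sigma> @ \<sigma> ! (m - 1) # drop m \<sigma>"
proof -
  have "m - 1 < length \<sigma>" "Suc (m - 1) = m" using chain_windows(3)[OF assms] m by simp_all
  then show "take m \<sigma> = take (m - 1) \<sigma> @ [\<sigma> ! (m - 1)]" "drop (m - 1) \<sigma> = \<sigma> ! (m - 1) # drop m \<sigma>"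
    "\<sigma> = take (m - 1) \<sigma> @ \<sigma> ! (m - 1) # drop m \<sigma>"
    by (metis take_Suc_conv_app_nth, metis Cons_nth_drop_Suc, metis id_take_nth_drop)
qed

(* The shared entry has \<open>b - 1\<close> smaller entries in the first window and \<open>a - 1\<close> in the
   second, and every other value lies in exactly one window. *)
lemma chain_middle:
  assumes \<sigma>: "\<sigma> \<in> chains"
  shows "\<sigma> ! (m - 1) = x"
proof -
  let ?y = "\<sigma> ! (m - 1)" and ?L = "set (take (m - 1) \<sigma>)" and ?R = "set (drop m \<sigma>)"
  note w = chain_windows[OF \<sigma>] and split = chain_split[OF \<sigma>]
  have "m - 1 < length \<sigma>" using w(3) m by simp
  then have "?y \<in> {1..N}" using w(5) nth_mem by blast
  have "rank_in (set (take m \<sigma>)) ?y = b - 1"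
    using rank_in_nth_if_st_eq[OF w(1), of "m - 1"] w(3) m by simp
  moreover have "{v \<in> set (take m \<sigma>). v < ?y} = {v \<in> ?L. v < ?y}"
    unfolding split(1) by auto
  ultimately have left: "card {v \<in> ?L. v < ?y} = b - 1"
    by (simp add: rank_in_def)
  have "rank_in (set (drop (m - 1) \<sigma>)) ?y = a - 1"
    using rank_in_nth_if_st_eq[OF w(2), of 0] w(3) m by simp
  moreover have "{v \<in> set (drop (m - 1) \<sigma>). v < ?y} = {v \<in> ?R. v < ?y}"
    unfolding split(2) by auto
  ultimately have right: "card {v \<in> ?R. v < ?y} = a - 1"
    by (simp add: rank_in_def)
  have "distinct (take (m - 1) \<sigma> @ ?y # drop m \<sigma>)" "set (take (m - 1) \<sigma> @ ?y # drop m \<sigma>) = {1..N}"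
    using w(4,5) split(3) by simp_all
  then have "?L \<inter> ?R = {}" "?L \<union> ?R = {1..N} - {?y}"
    by auto
  then have "{v \<in> {1..N}. v < ?y} = {v \<in> ?L. v < ?y} \<union> {v \<in> ?R. v < ?y}"
    "{v \<in> ?L. v < ?y} \<inter> {v \<in> ?R. v < ?y} = {}"
    by blast+
  then have "card {v \<in> {1..N}. v < ?y} = (b - 1) + (a - 1)"
    using left right by (simp add: card_Un_disjoint)
  moreover have "card {v \<in> {1..N}. v < ?y} = ?y - 1"
    using \<open>?y \<in> {1..N}\<close> by (intro card_less_in_interval) simp
  ultimately show ?thesis
    using ends_bounds \<open>?y \<in> {1..N}\<close> by (simp only: atLeastAtMost_iff) linarith
qed

lemma set_take_chain_mem:
  assumes \<sigma>: "\<sigma> \<in> chains"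
  shows "set (take m \<sigma>) \<in> first_windows"
proof -
  let ?S = "set (take m \<sigma>)"
  note w = chain_windows[OF \<sigma>]
  have len: "length (take m \<sigma>) = m" using w(3) m by simp
  have x: "take m \<sigma> ! (m - 1) = x" using chain_middle[OF \<sigma>] m by simp
  moreover have "take m \<sigma> ! (m - 1) \<in> ?S" using len m by (intro nth_mem) simp
  ultimately have "x \<in> ?S" by simp
  have below: "card {v \<in> ?S. v < x} = b - 1"
    using rank_in_nth_if_st_eq[OF w(1), of "m - 1"] len m x by (simp add: rank_in_def)
  have "card ?S = m" using w(4) len by (simp add: distinct_card)
  then have "card {v \<in> ?S. x < v} = m - b"
    using card_split_at[OF _ \<open>x \<in> ?S\<close>] below ends_bounds(3) by simp linarith
  moreover have "?S \<subseteq> {1..N}" using w(5) set_take_subset[of m \<sigma>] by argo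
  ultimately show ?thesis
    using \<open>x \<in> ?S\<close> below by (simp add: first_windows_def)
qed

lemma inj_on_set_take_chains: "inj_on (\<lambda>\<sigma>. set (take m \<sigma>)) chains"
proof (rule inj_onI)
  fix \<sigma> \<tau> assume \<sigma>: "\<sigma> \<in> chains" and \<tau>: "\<tau> \<in> chains" and eq: "set (take m \<sigma>) = set (take m \<tau>)"
  have determined: "take m \<rho> = destandardize (set (take m \<rho>)) p"
    "drop (m - 1) \<rho> = destandardize ({1..N} - set (take (m - 1) \<rho>)) p" if "\<rho> \<in> chains" for \<rho>
  proof -
    note w = chain_windows[OF that] and split = chain_split[OF that]
    have "distinct (take (m - 1) \<rho> @ drop (m - 1) \<rho>)" "set (take (m - 1) \<rho> @ drop (m - 1) \<rho>) = {1..N}"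
      using w(4,5) by simp_all
    then have "{1..N} - set (take (m - 1) \<rho>) = set (drop (m - 1) \<rho>)"
      by (auto simp del: append_take_drop_id)
    then show "take m \<rho> = destandardize (set (take m \<rho>)) p"
      "drop (m - 1) \<rho> = destandardize ({1..N} - set (take (m - 1) \<rho>)) p"
      using destandardize_st[of "take m \<rho>"] destandardize_st[of "drop (m - 1) \<rho>"] w(1,2,4)
      by simp_all
  qed
  have "take m \<sigma> = take m \<tau>" using determined(1)[OF \<sigma>] determined(1)[OF \<tau>] eq by simp
  then have "take (m - 1) \<sigma> = take (m - 1) \<tau>" by (metis diff_le_self min.absorb1 take_take)
  moreover have "drop (m - 1) \<sigma> = drop (m - 1) \<tau>"
    using determined(2)[OF \<sigma>] determined(2)[OF \<tau>] calculation by simp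
  ultimately show "\<sigma> = \<tau>" by (metis append_take_drop_id)
qed

lemma first_window_props:
  assumes "S \<in> first_windows"
  shows "S \<subseteq> {1..N}" "finite S" "x \<in> S" "card S = m" "rank_in S x = b - 1"
proof -
  show S: "S \<subseteq> {1..N}" "x \<in> S" and "rank_in S x = b - 1"
    using assms by (auto simp: first_windows_def rank_in_def)
  then show "finite S" using finite_subset by blast
  then show "card S = m"
    using card_split_at[OF _ \<open>x \<in> S\<close>] assms ends_bounds by (auto simp: first_windows_def)
qed

lemma second_window_props:
  assumes "S \<in> first_windows"
  defines "T \<equiv> insert x ({1..N} - S)"
  shows "finite T" "x \<in> T" "card T = m" "rank_in T x = a - 1"
proof -
  note S = first_window_props[OF assms(1)]
  show "finite T" "x \<in> T" by (simp_all add: T_def)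
  have "card ({1..N} - S) = m - 1" using S m by (simp add: card_Diff_subset)
  then show "card T = m" using S(3) m by (simp add: T_def)
  have "{v \<in> T. v < x} = {v \<in> {1..N}. v < x} - {v \<in> S. v < x}"
    using S(1) by (auto simp: T_def)
  moreover have "card {v \<in> {1..N}. v < x} = x - 1"
    using ends_bounds m by (intro card_less_in_interval) simp
  ultimately show "rank_in T x = a - 1"
    using S(1,2,5) ends_bounds by (simp add: rank_in_def card_Diff_subset subset_iff)
qed

lemma chain_from_first_window:
  assumes S: "S \<in> first_windows"
  shows "\<exists>\<sigma>\<in>chains. set (take m \<sigma>) = S"
proof -
  let ?T = "insert x ({1..N} - S)"
  note S' = first_window_props[OF S] and T = second_window_props[OF S]
  let ?u = "destandardize S p" and ?v = "destandardize ?T p"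
  let ?\<sigma> = "?u @ tl ?v"
  have pS: "p \<in> Sym (card S)" and pT: "p \<in> Sym (card ?T)" using p S'(4) T(3) by simp_all
  have len: "length ?u = m" "length ?v = m" using length_p by simp_all
  have u_last: "?u ! (m - 1) = x" and v_first: "?v ! 0 = x"
    using S'(2,3,5) T(1,2,4) m length_p by (simp_all add: nth_destandardize_eq)
  have u: "drop (m - 1) ?u = [x]"
    using Cons_nth_drop_Suc[of "m - 1" ?u] len m u_last by simp
  have "?v \<noteq> []" using len(2) m by (auto simp del: length_destandardize)
  then have v: "?v = x # tl ?v"
    using v_first by (metis hd_Cons_tl hd_conv_nth)
  have "distinct (x # tl ?v)" "set (x # tl ?v) = ?T"
    using v distinct_destandardize[OF T(1) pT] set_destandardize[OF T(1) pT] by simp_all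
  then have "set (tl ?v) = ?T - {x}"
    by (metis Diff_insert_absorb distinct.simps(2) list.simps(15))
  then have set_tl: "set (tl ?v) = {1..N} - S"
    using S'(3) by auto
  have "set ?\<sigma> = {1..N}" "distinct ?\<sigma>"
    using set_destandardize[OF S'(2) pS] distinct_destandardize[OF S'(2) pS]
      distinct_destandardize[OF T(1) pT] set_tl S'(1) by (auto simp: distinct_tl)
  moreover have "length ?\<sigma> = N" using len m by simp
  ultimately have "?\<sigma> \<in> Sym N" by (simp add: Sym_iff)
  moreover have "occurs_at p ?\<sigma> 0"
    using len st_destandardize[OF S'(2) pS] by (simp add: occurs_at_def length_p)
  moreover have "drop (m - 1) ?\<sigma> = ?v" using u v len by simp
  then have "occurs_at p ?\<sigma> (m - 1)"
    using len m st_destandardize[OF T(1) pT] by (simp add: occurs_at_def length_p)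
  moreover have "set (take m ?\<sigma>) = S" using len set_destandardize[OF S'(2) pS] by simp
  ultimately show ?thesis by (auto simp: chains_def)
qed

lemma card_first_windows: "card first_windows = (x - 1 choose (b - 1)) * (N - x choose (m - b))"
proof -
  let ?As = "{A. A \<subseteq> {1..<x} \<and> card A = b - 1}" and ?Bs = "{B. B \<subseteq> {x<..N} \<and> card B = m - b}"
  let ?glue = "\<lambda>(A, B). insert x (A \<union> B)"
  have "bij_betw ?glue (?As \<times> ?Bs) first_windows"
  proof (rule bij_betwI[where g = "\<lambda>S. (S \<inter> {1..<x}, S \<inter> {x<..N})"])
    show "?glue \<in> ?As \<times> ?Bs \<rightarrow> first_windows"
    proof
      fix AB assume "AB \<in> ?As \<times> ?Bs"
      then obtain A B where AB: "AB = (A, B)" "A \<subseteq> {1..<x}" "card A = b - 1"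
        "B \<subseteq> {x<..N}" "card B = m - b" by auto
      then have "{v \<in> insert x (A \<union> B). v < x} = A" "{v \<in> insert x (A \<union> B). x < v} = B"
        by auto
      moreover have "{1..<x} \<subseteq> {1..N}" "{x<..N} \<subseteq> {1..N}" "x \<in> {1..N}"
        using ends_bounds m by auto
      then have "insert x (A \<union> B) \<subseteq> {1..N}" using AB(2,4) by blast
      ultimately show "?glue AB \<in> first_windows"
        using AB by (simp add: first_windows_def)
    qed
    show "(\<lambda>S. (S \<inter> {1..<x}, S \<inter> {x<..N})) \<in> first_windows \<rightarrow> ?As \<times> ?Bs"
    proof
      fix S assume "S \<in> first_windows"
      then have "S \<subseteq> {1..N}" "card {v \<in> S. v < x} = b - 1" "card {v \<in> S. x < v} = m - b"
        by (auto simp: first_windows_def)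
      moreover from this(1) have "S \<inter> {1..<x} = {v \<in> S. v < x}" "S \<inter> {x<..N} = {v \<in> S. x < v}"
        by auto
      ultimately show "(S \<inter> {1..<x}, S \<inter> {x<..N}) \<in> ?As \<times> ?Bs" by auto
    qed
    show "(?glue AB \<inter> {1..<x}, ?glue AB \<inter> {x<..N}) = AB" if "AB \<in> ?As \<times> ?Bs" for AB
      using that by auto
    show "?glue (S \<inter> {1..<x}, S \<inter> {x<..N}) = S" if "S \<in> first_windows" for S
      using that ends_bounds by (auto simp: first_windows_def)
  qed
  then have "card first_windows = card (?As \<times> ?Bs)"
    by (rule bij_betw_same_card[symmetric])
  also have "\<dots> = card ?As * card ?Bs"
    by (rule card_cartesian_product)
  finally show ?thesis by (simp add: n_subsets)
qed

lemma chain_count_2_eq: "chain_count p 2 = (x - 1 choose (b - 1)) * (N - x choose (m - b))"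
proof -
  have "(\<lambda>\<sigma>. set (take m \<sigma>)) ` chains = first_windows"
    using set_take_chain_mem chain_from_first_window by blast
  then show ?thesis
    using chain_count_2 card_image[OF inj_on_set_take_chains] card_first_windows by simp
qed

end

definition two_chain_number :: "nat \<Rightarrow> nat \<Rightarrow> nat \<Rightarrow> nat" where
  "two_chain_number m a b = (a + b - 2 choose (b - 1)) * (2 * m - a - b choose (m - b))"

lemma chain_count_2_eq_two_chain_number:
  assumes "p \<in> Sym m" "2 \<le> m"
  shows "chain_count p 2 = two_chain_number m (p ! 0) (p ! (m - 1))"
proof -
  interpret two_chain p m using assms by unfold_locales
  show ?thesis
    using chain_count_2_eq ends_bounds by (simp add: two_chain_number_def numeral_2_eq_2)
qed

section \<open>Non-overlapping patterns with prescribed ends\<close>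

lemma non_overlappingI:
  assumes "2 \<le> length \<pi>"
    and "\<And>i. 1 \<le> i \<Longrightarrow> i \<le> length \<pi> - 2 \<Longrightarrow> st (drop i \<pi>) \<noteq> st (take (length \<pi> - i) \<pi>)"
  shows "non_overlapping \<pi>"
proof -
  have "length \<pi> - 1 \<in> overlap_set \<pi>"
  proof -
    have "drop (length \<pi> - 1) \<pi> = [\<pi> ! (length \<pi> - 1)]"
      using assms(1) Cons_nth_drop_Suc[of "length \<pi> - 1" \<pi>] by simp
    moreover have "take 1 \<pi> = [\<pi> ! 0]" using assms(1) by (cases \<pi>) auto
    ultimately show ?thesis
      using assms(1) by (simp add: overlap_set_def st_singleton)
  qed
  then show ?thesis
    using assms(2) by (fastforce simp: non_overlapping_def overlap_set_def)
qed

definition witness :: "nat \<Rightarrow> nat \<Rightarrow> nat \<Rightarrow> nat list" where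
  "witness m a b = [a..<b] @ [Suc b..<m] @ [1..<a] @ [m, b]"

context
  fixes m a b :: nat
  assumes a: "1 \<le> a" and ab: "a < b" and bm: "b < m"
begin

lemma length_witness: "length (witness m a b) = m"
  using a ab bm by (simp add: witness_def)

lemma witness_Sym: "witness m a b \<in> Sym m"
  using a ab bm by (auto simp: witness_def Sym_iff)

lemma witness_nth_first_run: "j < b - a \<Longrightarrow> witness m a b ! j = a + j"
  by (simp add: witness_def nth_append_left)

lemma witness_nth_second_run:
  assumes "b - a \<le> j" "j < m - a - 1"
  shows "witness m a b ! j = j + a + 1"
proof -
  have "witness m a b ! j = [Suc b..<m] ! (j - (b - a))"
    unfolding witness_def using assms ab bm
    by (subst nth_append_right, simp, subst nth_append_left) simp_all
  then show ?thesis using assms ab by simp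
qed

lemma witness_nth_third_run:
  assumes "m - a - 1 \<le> j" "j < m - 2"
  shows "witness m a b ! j = j + a + 2 - m"
proof -
  have "witness m a b ! j = [1..<a] ! (j - (m - a - 1))"
    unfolding witness_def using assms a ab bm
    by (subst nth_append_right, simp, subst nth_append_right, simp, subst nth_append_left) simp_all
  then show ?thesis using assms a ab bm by simp
qed

lemma witness_nth_max: "witness m a b ! (m - 2) = m"
  and witness_last: "witness m a b ! (m - 1) = b"
proof -
  let ?xs = "[a..<b] @ [Suc b..<m] @ [1..<a]"
  have W: "witness m a b = ?xs @ [m, b]" by (simp add: witness_def)
  have len: "length ?xs = m - 2" using a ab bm by simp
  show "witness m a b ! (m - 2) = m"
    unfolding W len[symmetric] by (rule nth_append_length)
  have "m - 1 = length ?xs + 1" using len a ab bm by simp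
  then show "witness m a b ! (m - 1) = b"
    unfolding W by (simp only: nth_append_length_plus) simp
qed

lemma witness_first: "witness m a b ! 0 = a"
  using witness_nth_first_run[of 0] ab by simp

lemma witness_descent:
  assumes j: "j + 1 < m" and descent: "witness m a b ! (j + 1) < witness m a b ! j"
  shows "j = m - 2 \<or> (2 \<le> a \<and> j = m - a - 2)"
proof (rule ccontr)
  let ?W = "witness m a b"
  assume "\<not> ?thesis"
  then have not_last: "j + 2 < m" and not_drop: "\<not> (2 \<le> a \<and> j = m - a - 2)"
    using j by auto
  have below_max: "?W ! j < m" if "j < m - a - 1"
    using that witness_nth_first_run[of j] witness_nth_second_run[of j] bm
    by (cases "j < b - a") auto
  consider "j + 1 < b - a" | "j + 1 = b - a" "j + 1 < m - a - 1" | "b - a \<le> j" "j + 1 < m - a - 1"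
    | "j + 1 = m - a - 1" | "m - a - 1 \<le> j" "j + 1 < m - 2" | "m - a - 1 \<le> j" "j + 1 = m - 2"
    using not_last ab bm by linarith
  then have "?W ! j < ?W ! (j + 1)"
  proof cases
    case 1
    then show ?thesis using witness_nth_first_run[of j] witness_nth_first_run[of "j + 1"] by simp
  next
    case 2
    then show ?thesis using witness_nth_first_run[of j] witness_nth_second_run[of "j + 1"] by simp
  next
    case 3
    then show ?thesis using witness_nth_second_run[of j] witness_nth_second_run[of "j + 1"] by simp
  next
    case 4
    then have "j + 1 = m - 2" using not_drop a by auto
    then show ?thesis using 4 below_max witness_nth_max by simp
  next
    case 5
    then show ?thesis using witness_nth_third_run[of j] witness_nth_third_run[of "j + 1"] by simp
  next
    case 6
    then show ?thesis using witness_nth_third_run[of j] witness_nth_max ab bm by simp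
  qed
  then show False using descent by simp
qed

(* An overlap would copy the final descent \<open>m > b\<close> of the suffix into the prefix. The only
   other descent ends at the entry \<open>1\<close>, which is then the minimum of the prefix, while the
   suffix still contains \<open>a - 1 < b\<close>. *)
lemma witness_non_overlapping:
  assumes room: "a = 1 \<or> a + 3 \<le> m"
  shows "non_overlapping (witness m a b)"
proof (rule non_overlappingI)
  let ?W = "witness m a b"
  show "2 \<le> length ?W" using length_witness ab bm by simp
  fix i assume i: "1 \<le> i" "i \<le> length ?W - 2"
  let ?L = "m - i"
  show "st (drop i ?W) \<noteq> st (take (length ?W - i) ?W)"
    unfolding length_witness
  proof
    assume eq: "st (drop i ?W) = st (take ?L ?W)"
    have "distinct ?W" using witness_Sym by (simp add: Sym_iff)
    then have same_order: "?W ! (i + j) < ?W ! (i + k) \<longleftrightarrow> ?W ! j < ?W ! k" if "j < ?L" "k < ?L" for j k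
      using st_eq_imp_less_iff[OF eq] that i length_witness by simp
    have "i + (?L - 1) = m - 1" "i + (?L - 2) = m - 2" "?L - 2 + 1 = ?L - 1"
      using i length_witness by simp_all
    then have "?W ! (?L - 2 + 1) < ?W ! (?L - 2)"
      using same_order[of "?L - 1" "?L - 2"] witness_last witness_nth_max i bm length_witness by simp
    then have "?L - 2 = m - 2 \<or> (2 \<le> a \<and> ?L - 2 = m - a - 2)"
      using witness_descent[of "?L - 2"] i length_witness by simp
    then have a2: "2 \<le> a" and ia: "i = a"
      using i length_witness ab bm by auto
    then have room3: "a + 3 \<le> m" using room by auto
    have "?W ! (m - 3) = m - 3 + a + 2 - m" "?W ! (m - a - 1) = m - a - 1 + a + 2 - m"
      by (rule witness_nth_third_run; use room3 a2 in linarith)+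
    then have "?W ! (m - 3) = a - 1" "?W ! (m - a - 1) = 1"
      using room3 by linarith+
    then have "?W ! (m - 3) < ?W ! (m - 1)" "?W ! (m - a - 1) = 1"
      using witness_last ab by simp_all
    moreover have "i + (m - 3 - a) = m - 3" "i + (?L - 1) = m - 1" "m - 3 - a < ?L" "?L - 1 < ?L" "?L - 1 = m - a - 1"
      using ia room3 i length_witness by simp_all
    ultimately have "?W ! (m - 3 - a) < 1"
      using same_order[of "m - 3 - a" "?L - 1"] by simp
    moreover have "1 \<le> ?W ! (m - 3 - a)"
      using nth_Sym_bounds[OF witness_Sym, of "m - 3 - a"] room3 by simp
    ultimately show False by simp
  qed
qed

end

section \<open>Standard-form ends\<close>

lemma standard_form_ends:
  assumes p: "p \<in> Sym m" and sf: "standard_form p"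
  shows "2 \<le> m" "1 \<le> p ! 0" "p ! 0 < p ! (m - 1)" "p ! (m - 1) \<le> m" "p ! 0 + p ! (m - 1) \<le> m + 1"
proof -
  show "p ! 0 < p ! (m - 1)" "p ! 0 + p ! (m - 1) \<le> m + 1"
    using sf length_Sym[OF p] by (simp_all add: standard_form_def)
  then have "m - 1 \<noteq> 0" by (metis less_irrefl)
  then show "2 \<le> m" by simp
  then show "1 \<le> p ! 0" "p ! (m - 1) \<le> m"
    using nth_Sym_bounds[OF p, of 0] nth_Sym_bounds[OF p, of "m - 1"] by simp_all
qed

lemma two_chain_number_eq_1_imp:
  assumes "1 \<le> a" "a < b" "b \<le> m" "two_chain_number m a b = 1"
  shows "a = 1 \<and> b = m"
proof -
  have "a + b - 2 choose (b - 1) = 1" "2 * m - a - b choose (m - b) = 1"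
    using assms(4) by (simp_all add: two_chain_number_def)
  then have "b - 1 = 0 \<or> b - 1 = a + b - 2" "m - b = 0 \<or> m - b = 2 * m - a - b"
    by (blast dest: choose_eq_1_imp)+
  then show ?thesis using assms(1-3) by linarith
qed

(* The standard-form ends for which the witness is not available. *)
definition exceptional_ends :: "nat \<Rightarrow> nat \<Rightarrow> nat \<Rightarrow> bool" where
  "exceptional_ends m a b \<longleftrightarrow> (a = 1 \<and> b = m) \<or> (m = 4 \<and> a = 2 \<and> b = 3)"

lemma ends_eq_if_two_chain_number_eq:
  assumes ab: "1 \<le> a" "a < b" "b \<le> m" "a + b \<le> m + 1"
    and cd: "1 \<le> c" "c < d" "d \<le> m" "c + d \<le> m + 1"
    and eq: "two_chain_number m a b = two_chain_number m c d"
    and exceptional: "exceptional_ends m a b"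
  shows "a = c \<and> b = d"
  using exceptional unfolding exceptional_ends_def
proof
  assume "a = 1 \<and> b = m"
  then have "two_chain_number m c d = 1"
    using eq ab by (simp add: two_chain_number_def)
  then show ?thesis using two_chain_number_eq_1_imp cd \<open>a = 1 \<and> b = m\<close> by blast
next
  assume m4: "m = 4 \<and> a = 2 \<and> b = 3"
  then have "c = 1 \<and> (d = 2 \<or> d = 3 \<or> d = 4) \<or> c = 2 \<and> d = 3" using cd by linarith
  then show ?thesis using eq m4 by (auto simp: two_chain_number_def eval_nat_numeral)
qed

lemma ends_eq_if_exceptional:
  assumes \<pi>: "\<pi> \<in> Sym m" "standard_form \<pi>" and \<tau>: "\<tau> \<in> Sym m" "standard_form \<tau>"
    and chain2: "chain_count \<pi> 2 = chain_count \<tau> 2"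
    and "exceptional_ends m (\<pi> ! 0) (\<pi> ! (m - 1)) \<or> exceptional_ends m (\<tau> ! 0) (\<tau> ! (m - 1))"
  shows "\<pi> ! 0 = \<tau> ! 0 \<and> \<pi> ! (m - 1) = \<tau> ! (m - 1)"
  using assms(6)
proof (elim disjE)
  note ends\<pi> = standard_form_ends[OF \<pi>] and ends\<tau> = standard_form_ends[OF \<tau>]
  have eq: "two_chain_number m (\<pi> ! 0) (\<pi> ! (m - 1)) = two_chain_number m (\<tau> ! 0) (\<tau> ! (m - 1))"
    using chain2 chain_count_2_eq_two_chain_number \<pi>(1) \<tau>(1) ends\<pi>(1) by simp
  show ?thesis if "exceptional_ends m (\<pi> ! 0) (\<pi> ! (m - 1))"
    using eq that by (rule ends_eq_if_two_chain_number_eq[OF ends\<pi>(2-5) ends\<tau>(2-5)])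
  show ?thesis if "exceptional_ends m (\<tau> ! 0) (\<tau> ! (m - 1))"
    using ends_eq_if_two_chain_number_eq[OF ends\<tau>(2-5) ends\<pi>(2-5) eq[symmetric] that] by simp
qed

lemma witness_conditions:
  assumes "1 \<le> a" "a < b" "b \<le> m" "a + b \<le> m + 1" "\<not> exceptional_ends m a b"
  shows "b < m" "a = 1 \<or> a + 3 \<le> m"
  using assms by (auto simp: exceptional_ends_def)

lemma witness_standard_form:
  assumes "1 \<le> a" "a < b" "b < m" "a + b \<le> m + 1"
  shows "standard_form (witness m a b)"
  using assms witness_first witness_last length_witness by (simp add: standard_form_def)

lemma witness_for_standard_form:
  assumes p: "p \<in> Sym m" and sf: "standard_form p" and "\<not> exceptional_ends m (p ! 0) (p ! (m - 1))"
  defines "w \<equiv> witness m (p ! 0) (p ! (m - 1))"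
  shows "w \<in> Sym m" "non_overlapping w" "standard_form w" "w ! 0 = p ! 0" "w ! (m - 1) = p ! (m - 1)"
    "chain_count w k = chain_count p k"
proof -
  note ends = standard_form_ends[OF p sf]
  note cond = witness_conditions[OF ends(2-5) assms(3)]
  show "w \<in> Sym m" "non_overlapping w" "standard_form w" and first: "w ! 0 = p ! 0"
    and last: "w ! (m - 1) = p ! (m - 1)"
    unfolding w_def using ends cond witness_first witness_last
    by (simp_all add: witness_Sym witness_non_overlapping witness_standard_form)
  then show "chain_count w k = chain_count p k"
    using chain_count_eq_if_same_ends[of w m p] p ends(1) by simp
qed

lemma witnesses_c_wilf_equiv:
  assumes \<pi>: "\<pi> \<in> Sym m" "standard_form \<pi>" "\<not> exceptional_ends m (\<pi> ! 0) (\<pi> ! (m - 1))"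
    and \<tau>: "\<tau> \<in> Sym m" "standard_form \<tau>" "\<not> exceptional_ends m (\<tau> ! 0) (\<tau> ! (m - 1))"
    and chains: "\<And>k. chain_count \<pi> k = chain_count \<tau> k"
  shows "c_wilf_equiv (witness m (\<pi> ! 0) (\<pi> ! (m - 1))) (witness m (\<tau> ! 0) (\<tau> ! (m - 1)))"
proof -
  note w\<pi> = witness_for_standard_form[OF \<pi>] and w\<tau> = witness_for_standard_form[OF \<tau>]
  show ?thesis
    using length_Sym[OF w\<pi>(1)] length_Sym[OF w\<tau>(1)] standard_form_ends(1)[OF \<pi>(1,2)]
      w\<pi>(2,6) w\<tau>(2,6) chains
    by (intro c_wilf_equiv_if_chain_count_eq) simp_all
qed

theorem theorem1p8:
  assumes A: "\<forall>m\<ge>1. \<forall>\<pi>\<in>Sym m. \<forall>\<tau>\<in>Sym m.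
      non_overlapping \<pi> \<and> non_overlapping \<tau> \<and> standard_form \<pi> \<and> standard_form \<tau> \<and>
      c_wilf_equiv \<pi> \<tau> \<longrightarrow> \<pi> ! 0 = \<tau> ! 0 \<and> \<pi> ! (m - 1) = \<tau> ! (m - 1)"
  shows "\<forall>m\<ge>1. \<forall>\<pi>\<in>Sym m. \<forall>\<tau>\<in>Sym m.
      standard_form \<pi> \<and> standard_form \<tau> \<and>
      strongly_c_wilf_equiv \<pi> \<tau> \<longrightarrow> \<pi> ! 0 = \<tau> ! 0 \<and> \<pi> ! (m - 1) = \<tau> ! (m - 1)"
proof (intro allI impI ballI)
  fix m \<pi> \<tau>
  assume "1 \<le> m" and \<pi>: "\<pi> \<in> Sym m" and \<tau>: "\<tau> \<in> Sym m"
    and "standard_form \<pi> \<and> standard_form \<tau> \<and> strongly_c_wilf_equiv \<pi> \<tau>"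
  then have sf: "standard_form \<pi>" "standard_form \<tau>" and strong: "strongly_c_wilf_equiv \<pi> \<tau>"
    by simp_all
  have chains: "chain_count \<pi> k = chain_count \<tau> k" for k
    using chain_count_eq_if_strongly_c_wilf_equiv[OF _ _ strong] standard_form_ends(1)[OF \<pi> sf(1)]
      length_Sym[OF \<pi>] length_Sym[OF \<tau>] by simp
  show "\<pi> ! 0 = \<tau> ! 0 \<and> \<pi> ! (m - 1) = \<tau> ! (m - 1)"
  proof (cases "exceptional_ends m (\<pi> ! 0) (\<pi> ! (m - 1)) \<or> exceptional_ends m (\<tau> ! 0) (\<tau> ! (m - 1))")
    case True
    then show ?thesis by (rule ends_eq_if_exceptional[OF \<pi> sf(1) \<tau> sf(2) chains])
  next
    case False
    let ?w\<pi> = "witness m (\<pi> ! 0) (\<pi> ! (m - 1))" and ?w\<tau> = "witness m (\<tau> ! 0) (\<tau> ! (m - 1))"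
    have "c_wilf_equiv ?w\<pi> ?w\<tau>" using witnesses_c_wilf_equiv \<pi> \<tau> sf False chains by simp
    moreover note w\<pi> = witness_for_standard_form[OF \<pi> sf(1)] and w\<tau> = witness_for_standard_form[OF \<tau> sf(2)]
    ultimately have "?w\<pi> ! 0 = ?w\<tau> ! 0 \<and> ?w\<pi> ! (m - 1) = ?w\<tau> ! (m - 1)"
      using A \<open>1 \<le> m\<close> False by blast
    then show ?thesis using w\<pi>(4,5) w\<tau>(4,5) False by simp
  qed
qed

end
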